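(* Under the hypotheses of the theorem on estimating $t^\star_\delta$ (stated in the context), there are constants $c_{1},c_{2},c_{3},c_{4},L_T,U_T,U_{\Delta}>0$ such that for $a\in\{0,1\}$, all $n$ and all $r_n,\Delta_n,\epsilon$ with $L_T(\phi_{n,1}\vee\phi_{n,0})<r_n<U_T$, $2\big(g_{\delta,-}(4r_n)\vee g_{\delta,+}(4r_n)\big)<\Delta_n<U_\Delta$ and $L_T(\phi_{n,1}\vee\phi_{n,0})<\epsilon<r_n$, $$P^{\otimes n}\big(|\widehat T_{\delta,a}-T^\star_{\delta,a}|>\epsilon\big)\le\psi_{n,1}(\epsilon)+\sum_{j\in\{-,+\}}I\big(\delta=D_j(t^\star_\delta)\big)\psi_{n,2}\big(g_{\delta,j}(\omega(\epsilon,r_n))\big),$$ with $\psi_{n,1}(x)=c_1\exp(-c_2(x/(\phi_{n,1}\vee\phi_{n,0}))^2)$, $\psi_{n,2}(x)=c_3\exp(-c_4nx^2)$.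
   Context: Setting: $(X,A,Y)$ on $\mathbb{R}^d\times\{0,1\}\times\{0,1\}$ with law $P$, $p_a=P(A=a)>0$, $P_{X|A=a}$ the conditional law, $\eta_a(x)=P(Y=1\mid A=a,X=x)$. $D_-(t)=P_{X|A=1}\big(\eta_1(X)>\tfrac12+\tfrac{t}{2p_1}\big)-P_{X|A=0}\big(\eta_0(X)\ge\tfrac12-\tfrac{t}{2p_0}\big)$, $D_+(t)=P_{X|A=1}\big(\eta_1(X)\ge\tfrac12+\tfrac{t}{2p_1}\big)-P_{X|A=0}\big(\eta_0(X)>\tfrac12-\tfrac{t}{2p_0}\big)$; $t^\star_\delta=\inf\{t:D_-(t)<\delta\}$ if $D_-(0)>\delta$, else $0$; $T^\star_{\delta,a}=\tfrac12+\tfrac{(2a-1)t^\star_\delta}{2p_a}$; standing assumption $D_+(0)\ge-D_-(0)$; $g_{\delta,-}(\epsilon)=D_-(t^\star_\delta)-D_-(t^\star_\delta+\epsilon)$, $g_{\delta,+}(\epsilon)=D_+(t^\star_\delta-\epsilon)-D_+(t^\star_\delta)$. Hypotheses: $(\eta_1,\eta_0)$ satisfies the $\gamma$-margin condition at $\delta$ (there are $\epsilon_0,U_\gamma>0$ with $\max\{g_{\delta,\pm}(\epsilon)\}\le U_\gamma\epsilon^\gamma$ for $0<\epsilon<\epsilon_0$ and $g_{\delta,j}(\epsilon)\ge U_\gamma^{-1}\epsilon^\gamma$ for $0<\epsilon<\epsilon_0$ whenever $D_j(t^\star_\delta)=\delta$); $\phi_{n,a}$ positive non-increasing with $\phi_{n,a}\ge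 c_\mu n^{-1/2}$; estimators $\widehat\eta_a$ (measurable functions of an i.i.d. sample $\mathcal S_n$ of size $n$ from $P$) satisfy: there are $c_{1,\eta},c_{2,\eta},L_\eta,U_\eta>0$ and $\Omega$ with $P_X(\Omega)=1$ such that $P^{\otimes n}(\sup_{x\in\Omega}|\widehat\eta_a(x)-\eta_a(x)|>\epsilon)\le c_{1,\eta}\exp(-c_{2,\eta}(\epsilon/\phi_{n,a})^2)$ for $L_\eta\phi_{n,a}<\epsilon<U_\eta$. With $n_a=\#\{i:A_i=a\}$ and $X_{a,j}$ the group-$a$ features, $\widehat D_n(t)=\frac1{n_1}\sum_jI(\widehat\eta_1(X_{1,j})>\tfrac12+\tfrac{nt}{2n_1})-\frac1{n_0}\sum_jI(\widehat\eta_0(X_{0,j})>\tfrac12-\tfrac{nt}{2n_0})$; $\widehat t_{\mathrm{mid}}=\inf\{t\ge0:\widehat D_n(t)<\delta\}$, $\widehat t_{\min}=\inf\{t\ge0:\widehat D_n(t)<\delta+\Delta_n\}$, $\widehat t_{\max}=\inf\{t\ge0:\widehat D_n(t)<\delta-\Delta_n\}$; $\widehat t_\delta=\widehat t_{\min}$ if $\widehat t_{\mathrm{mid}}-\widehat t_{\min}\le r_n$, $=\widehat t_{\max}$ if $\widehat t_{\mathrm{mid}}-\widehat t_{\min}>r_n$ and $\widehat t_{\max}-\widehat t_{\mathrm{mid}}\le r_n$, $=\widehat t_{\mathrm{mid}}$ otherwise. The estimated thresholds are $\widehat T_{\delta,a}=\tfrac12+\tfrac{(2a-1)n\widehat t_\delta}{2n_a}$.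 $\omega(\epsilon,r)=\epsilon$ if $t^\star_\delta>0$ and $D_-(t^\star_\delta)=D_+(t^\star_\delta)=\delta$, and $\omega(\epsilon,r)=r$ otherwise. Constants may depend on $P$, $\delta$ and the convergence constants. *)

theory Defs
  imports "HOL-Probability.Probability"
begin

(* Data: triples (X, A, Y) with X in a Euclidean space (R^d), A, Y in {0,1}
   encoded as bool (True = 1, False = 0). *)

definition sgnA :: "bool \<Rightarrow> real" where
  "sgnA a = (if a then 1 else -1)"

definition pA :: "('x \<times> bool \<times> bool) measure \<Rightarrow> bool \<Rightarrow> real" where
  "pA P a = measure P {w \<in> space P. fst (snd w) = a}"

definition condX :: "('x \<times> bool \<times> bool) measure \<Rightarrow> bool \<Rightarrow> 'x set \<Rightarrow> real" where
  "condX P a S = measure P {w \<in> space P. fst w \<in> S \<and> fst (snd w) = a} / pA P a"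

(* eta_a(x) = P(Y = 1 | A = a, X = x): a (Borel, [0,1]-valued) version of the
   conditional probability, characterised by its defining integral identity *)
definition is_regression :: "('x::euclidean_space \<times> bool \<times> bool) measure \<Rightarrow> (bool \<Rightarrow> 'x \<Rightarrow> real) \<Rightarrow> bool" where
  "is_regression P \<eta> \<longleftrightarrow> (\<forall>a. \<eta> a \<in> borel_measurable borel \<and> (\<forall>x. 0 \<le> \<eta> a x \<and> \<eta> a x \<le> 1) \<and>
     (\<forall>S \<in> sets borel.
        measure P {w \<in> space P. fst w \<in> S \<and> fst (snd w) = a \<and> snd (snd w)}
        = (\<integral>w. indicator {w. fst w \<in> S \<and> fst (snd w) = a} w * \<eta> a (fst w) \<partial>P)))"

definition Dm :: "('x \<times> bool \<times> bool) measure \<Rightarrow> (bool \<Rightarrow> 'x \<Rightarrow> real) \<Rightarrow> real \<Rightarrow> real" where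
  "Dm P \<eta> t = condX P True {x. \<eta> True x > 1/2 + t / (2 * pA P True)}
             - condX P False {x. \<eta> False x \<ge> 1/2 - t / (2 * pA P False)}"

definition Dp :: "('x \<times> bool \<times> bool) measure \<Rightarrow> (bool \<Rightarrow> 'x \<Rightarrow> real) \<Rightarrow> real \<Rightarrow> real" where
  "Dp P \<eta> t = condX P True {x. \<eta> True x \<ge> 1/2 + t / (2 * pA P True)}
             - condX P False {x. \<eta> False x > 1/2 - t / (2 * pA P False)}"

definition tstar :: "('x \<times> bool \<times> bool) measure \<Rightarrow> (bool \<Rightarrow> 'x \<Rightarrow> real) \<Rightarrow> real \<Rightarrow> real" where
  "tstar P \<eta> \<delta> = (if Dm P \<eta> 0 > \<delta> then Inf {t. Dm P \<eta> t < \<delta>} else 0)"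

definition Tstar :: "('x \<times> bool \<times> bool) measure \<Rightarrow> (bool \<Rightarrow> 'x \<Rightarrow> real) \<Rightarrow> real \<Rightarrow> bool \<Rightarrow> real" where
  "Tstar P \<eta> \<delta> a = 1/2 + sgnA a * tstar P \<eta> \<delta> / (2 * pA P a)"

definition gm :: "('x \<times> bool \<times> bool) measure \<Rightarrow> (bool \<Rightarrow> 'x \<Rightarrow> real) \<Rightarrow> real \<Rightarrow> real \<Rightarrow> real" where
  "gm P \<eta> \<delta> \<epsilon> = Dm P \<eta> (tstar P \<eta> \<delta>) - Dm P \<eta> (tstar P \<eta> \<delta> + \<epsilon>)"

definition gp :: "('x \<times> bool \<times> bool) measure \<Rightarrow> (bool \<Rightarrow> 'x \<Rightarrow> real) \<Rightarrow> real \<Rightarrow> real \<Rightarrow> real" where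
  "gp P \<eta> \<delta> \<epsilon> = Dp P \<eta> (tstar P \<eta> \<delta> - \<epsilon>) - Dp P \<eta> (tstar P \<eta> \<delta>)"

definition margin_condition :: "('x \<times> bool \<times> bool) measure \<Rightarrow> (bool \<Rightarrow> 'x \<Rightarrow> real) \<Rightarrow> real \<Rightarrow> real \<Rightarrow> bool" where
  "margin_condition P \<eta> \<delta> \<gamma> \<longleftrightarrow> (\<exists>\<epsilon>0 U. \<epsilon>0 > 0 \<and> U > 0 \<and>
     (\<forall>\<epsilon>. 0 < \<epsilon> \<and> \<epsilon> < \<epsilon>0 \<longrightarrow>
        max (gm P \<eta> \<delta> \<epsilon>) (gp P \<eta> \<delta> \<epsilon>) \<le> U * \<epsilon> powr \<gamma>
      \<and> (Dm P \<eta> (tstar P \<eta> \<delta>) = \<delta> \<longrightarrow> gm P \<eta> \<delta> \<epsilon> \<ge> \<epsilon> powr \<gamma> / U)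
      \<and> (Dp P \<eta> (tstar P \<eta> \<delta>) = \<delta> \<longrightarrow> gp P \<eta> \<delta> \<epsilon> \<ge> \<epsilon> powr \<gamma> / U)))"

definition omega :: "('x \<times> bool \<times> bool) measure \<Rightarrow> (bool \<Rightarrow> 'x \<Rightarrow> real) \<Rightarrow> real \<Rightarrow> real \<Rightarrow> real \<Rightarrow> real" where
  "omega P \<eta> \<delta> \<epsilon> r = (if tstar P \<eta> \<delta> > 0 \<and> Dm P \<eta> (tstar P \<eta> \<delta>) = \<delta> \<and> Dp P \<eta> (tstar P \<eta> \<delta>) = \<delta>
                         then \<epsilon> else r)"

(* ---- empirical quantities; a sample of size n is s :: nat => ..., with entries s 0, ..., s (n-1);
   the estimator etahat n a s x is computed from the sample s ---- *)

definition ncount :: "nat \<Rightarrow> (nat \<Rightarrow> 'x \<times> bool \<times> bool) \<Rightarrow> bool \<Rightarrow> nat" where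
  "ncount n s a = card {i. i < n \<and> fst (snd (s i)) = a}"

definition Dhat :: "(nat \<Rightarrow> bool \<Rightarrow> (nat \<Rightarrow> 'x \<times> bool \<times> bool) \<Rightarrow> 'x \<Rightarrow> real)
                    \<Rightarrow> nat \<Rightarrow> (nat \<Rightarrow> 'x \<times> bool \<times> bool) \<Rightarrow> real \<Rightarrow> real" where
  "Dhat eh n s t =
     (1 / real (ncount n s True)) *
       (\<Sum>i\<in>{i. i < n \<and> fst (snd (s i))}.
          (if eh n True s (fst (s i)) > 1/2 + real n * t / (2 * real (ncount n s True)) then 1 else 0))
   - (1 / real (ncount n s False)) *
       (\<Sum>i\<in>{i. i < n \<and> \<not> fst (snd (s i))}.
          (if eh n False s (fst (s i)) > 1/2 - real n * t / (2 * real (ncount n s False)) then 1 else 0))"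

definition tlevel :: "(nat \<Rightarrow> bool \<Rightarrow> (nat \<Rightarrow> 'x \<times> bool \<times> bool) \<Rightarrow> 'x \<Rightarrow> real)
                    \<Rightarrow> nat \<Rightarrow> (nat \<Rightarrow> 'x \<times> bool \<times> bool) \<Rightarrow> real \<Rightarrow> real" where
  "tlevel eh n s c = Inf {t. 0 \<le> t \<and> Dhat eh n s t < c}"

definition that :: "(nat \<Rightarrow> bool \<Rightarrow> (nat \<Rightarrow> 'x \<times> bool \<times> bool) \<Rightarrow> 'x \<Rightarrow> real)
                    \<Rightarrow> nat \<Rightarrow> (nat \<Rightarrow> 'x \<times> bool \<times> bool) \<Rightarrow> real \<Rightarrow> real \<Rightarrow> real \<Rightarrow> real" where
  "that eh n s \<delta> \<Delta> r =
     (let tmid = tlevel eh n s \<delta>; tmin = tlevel eh n s (\<delta> + \<Delta>); tmax = tlevel eh n s (\<delta> - \<Delta>)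
      in if tmid - tmin \<le> r then tmin
         else if tmax - tmid \<le> r then tmax
         else tmid)"

definition That :: "(nat \<Rightarrow> bool \<Rightarrow> (nat \<Rightarrow> 'x \<times> bool \<times> bool) \<Rightarrow> 'x \<Rightarrow> real)
                    \<Rightarrow> nat \<Rightarrow> (nat \<Rightarrow> 'x \<times> bool \<times> bool) \<Rightarrow> real \<Rightarrow> real \<Rightarrow> real \<Rightarrow> bool \<Rightarrow> real" where
  "That eh n s \<delta> \<Delta> r a = 1/2 + sgnA a * real n * that eh n s \<delta> \<Delta> r / (2 * real (ncount n s a))"

(* outer probability bound: the event E is contained in a measurable set of measure <= b
   (coincides with "measure M E <= b" when E is measurable) *)
definition outer_prob_le :: "'a measure \<Rightarrow> 'a set \<Rightarrow> real \<Rightarrow> bool" where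
  "outer_prob_le M E b \<longleftrightarrow> (\<exists>F \<in> sets M. E \<inter> space M \<subseteq> F \<and> measure M F \<le> b)"

end

theory Submission
  imports Defs
begin

text \<open>Away from a small exceptional event, a sample is good: the group proportions \<open>n\<^sub>a / n\<close>, the
  plug-in estimates \<open>\<eta>\<^sub>a\<close> on the sample points and the empirical frequencies of finitely many
  population level sets \<open>{\<eta>\<^sub>a > \<cdot>}\<close> are all accurate. On a good sample the empirical disparity
  \<open>D\<^sub>n(t)\<close>, which is non-increasing, is squeezed between \<open>D\<^sub>-(t + \<kappa>)\<close> and \<open>D\<^sub>+(t - \<kappa>)\<close> up to a
  small error at seven test points around \<open>t\<^sup>\<star>\<close>. The margin condition then locates the crossings of
  the three levels \<open>\<delta>\<close>, \<open>\<delta> \<plusminus> \<Delta>\<^sub>n\<close> well enough that the selection rule returns a point within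
  \<open>p\<^sub>m\<^sub>i\<^sub>n \<epsilon> / 2\<close> of \<open>t\<^sup>\<star>\<close>, whence \<open>|T\<^sub>\<delta>\<^sub>,\<^sub>a - T\<^sup>\<star>\<^sub>\<delta>\<^sub>,\<^sub>a| \<le> \<epsilon>\<close>. The exceptional event is covered by
  the Hoeffding tails of the frequencies and the uniform deviation tail of the estimator of \<open>\<eta>\<close>.
  The Hoeffding deviation can be taken proportional to \<open>\<epsilon>\<close> unless \<open>D\<^sub>\<plusminus>(t\<^sup>\<star>) = \<delta>\<close>, in which case
  it must be proportional to \<open>g\<^sub>\<delta>\<^sub>,\<^sub>\<plusminus>(\<omega>(\<epsilon>, r\<^sub>n))\<close>; this produces the second kind of term.\<close>

lemma ratio_perturbation:
  fixes c m p q \<tau> :: real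
  assumes "0 < p" "0 \<le> m" "m \<le> p" "\<bar>q - p\<bar> \<le> \<tau>" "\<tau> \<le> p / 2" "\<bar>c - m\<bar> \<le> \<tau>"
  shows "\<bar>c / q - m / p\<bar> \<le> 4 * \<tau> / p"
proof -
  have p: "p > 0" and q: "q \<ge> p / 2" using assms by linarith+
  have "\<bar>p * (c - m)\<bar> \<le> p * \<tau>" "\<bar>m * (p - q)\<bar> \<le> p * \<tau>"
    using assms by (simp_all add: abs_mult mult_mono abs_minus_commute)
  hence "\<bar>p * (c - m) + m * (p - q)\<bar> \<le> p * \<tau> + p * \<tau>"
    using abs_triangle_ineq[of "p * (c - m)" "m * (p - q)"] by linarith
  moreover have "c / q - m / p = (p * (c - m) + m * (p - q)) / (p * q)"
    using p q by (simp add: field_simps)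
  ultimately have "\<bar>c / q - m / p\<bar> \<le> 2 * \<tau> / q"
    using p q by (simp add: abs_divide abs_mult divide_le_eq field_simps)
  also have "\<dots> \<le> 2 * \<tau> / (p / 2)"
    using p q assms by (intro divide_left_mono) auto
  finally show ?thesis by simp
qed

lemma threshold_perturbation:
  fixes p q \<tau> e B t \<kappa> pm :: real
  assumes "0 < pm" "pm \<le> p" "p \<le> 1" "\<bar>q - p\<bar> \<le> \<tau>" "\<tau> \<le> p / 2"
    and "0 \<le> t" "t \<le> B" "0 \<le> e" "2 * e + 2 * B * \<tau> / pm \<le> \<kappa>"
  shows "(t - \<kappa>) / (2 * p) \<le> t / (2 * q) - e" "t / (2 * q) + e \<le> (t + \<kappa>) / (2 * p)"
proof -
  have p: "p > 0" and q: "q \<ge> p / 2" and \<tau>: "\<tau> \<ge> 0" using assms by linarith+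
  have "t / (2 * q) - t / (2 * p) = t * (p - q) / (2 * p * q)"
    using p q by (simp add: field_simps)
  hence "\<bar>t / (2 * q) - t / (2 * p)\<bar> = t * \<bar>p - q\<bar> / (2 * p * q)"
    using p q assms by (simp add: abs_divide abs_mult)
  also have "\<dots> \<le> B * \<tau> / (2 * p * (p / 2))"
    using p q assms \<tau> by (intro frac_le mult_mono mult_pos_pos) auto
  finally have d: "\<bar>t / (2 * q) - t / (2 * p)\<bar> \<le> B * \<tau> / (p * p)" by simp
  have "2 * p * e + 2 * B * \<tau> / p \<le> 2 * e + 2 * B * \<tau> / pm"
    using assms p \<tau> by (intro add_mono divide_left_mono) (auto simp: mult_left_le_one_le)
  hence "(2 * p * e + 2 * B * \<tau> / p) / (2 * p) \<le> \<kappa> / (2 * p)"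
    using assms p by (intro divide_right_mono) auto
  hence "e + B * \<tau> / (p * p) \<le> \<kappa> / (2 * p)"
    using p by (simp add: add_divide_distrib)
  with d show "(t - \<kappa>) / (2 * p) \<le> t / (2 * q) - e" "t / (2 * q) + e \<le> (t + \<kappa>) / (2 * p)"
    by (auto simp: abs_le_iff diff_divide_distrib add_divide_distrib)
qed

lemma threshold_estimate_error:
  fixes pm p q \<tau> x T \<epsilon> :: real
  assumes "0 < pm" "pm \<le> p" "\<bar>q - p\<bar> \<le> \<tau>" "\<tau> \<le> p / 2" "0 \<le> T" "0 < \<epsilon>"
    and "\<bar>x - T\<bar> \<le> pm * \<epsilon> / 2" "\<tau> \<le> pm\<^sup>2 * \<epsilon> / (4 * (T + 1))"
  shows "\<bar>x / (2 * q) - T / (2 * p)\<bar> \<le> \<epsilon>"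
proof -
  have p: "p > 0" and q: "q \<ge> p / 2" and \<tau>: "\<tau> \<ge> 0" using assms by linarith+
  have "\<bar>(x - T) / (2 * q)\<bar> = \<bar>x - T\<bar> / (2 * q)" using p q by (simp add: abs_divide)
  also have "\<dots> \<le> (pm * \<epsilon> / 2) / (2 * (p / 2))"
    using assms p q by (intro frac_le) auto
  also have "\<dots> = (pm / p) * (\<epsilon> / 2)" using p by simp
  also have "\<dots> \<le> \<epsilon> / 2" using assms p by (intro mult_left_le_one_le) auto
  finally have first: "\<bar>(x - T) / (2 * q)\<bar> \<le> \<epsilon> / 2" .
  have "\<bar>T * (p - q) / (2 * p * q)\<bar> = T * \<bar>p - q\<bar> / (2 * p * q)"
    using assms p q by (simp add: abs_divide abs_mult)
  also have "\<dots> \<le> T * \<tau> / (2 * p * (p / 2))"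
    using assms p q \<tau> by (intro frac_le mult_left_mono mult_pos_pos) (auto simp: abs_minus_commute)
  also have "\<dots> = T * \<tau> / (p * p)" by simp
  also have "\<dots> \<le> T * \<tau> / (pm * pm)"
    using assms \<tau> by (intro divide_left_mono mult_mono) auto
  also have "\<dots> \<le> T * (pm\<^sup>2 * \<epsilon> / (4 * (T + 1))) / (pm * pm)"
    using assms by (intro divide_right_mono mult_left_mono) auto
  also have "\<dots> = (T / (T + 1)) * (\<epsilon> / 4)"
    using assms by (simp add: power2_eq_square)
  also have "\<dots> \<le> \<epsilon> / 4" using assms by (intro mult_left_le_one_le) auto
  finally have second: "\<bar>T * (p - q) / (2 * p * q)\<bar> \<le> \<epsilon> / 4" .
  have "x / (2 * q) - T / (2 * p) = (x - T) / (2 * q) + T * (p - q) / (2 * p * q)"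
    using p q by (simp add: field_simps)
  with first second show ?thesis
    using abs_triangle_ineq[of "(x - T) / (2 * q)" "T * (p - q) / (2 * p * q)"] assms by linarith
qed

lemma nonpos_if_le_powr_near_zero:
  fixes a U e0 \<gamma> :: real
  assumes "e0 > 0" "U > 0" "\<gamma> > 0" and le: "\<And>x. 0 < x \<Longrightarrow> x < e0 \<Longrightarrow> a \<le> U * x powr \<gamma>"
  shows "a \<le> 0"
proof (rule ccontr)
  assume "\<not> a \<le> 0"
  hence a: "a > 0" by simp
  define x where "x = min (e0 / 2) ((a / (2 * U)) powr (1 / \<gamma>))"
  have x: "0 < x" "x < e0" using a assms by (auto simp: x_def)
  have "x powr \<gamma> \<le> ((a / (2 * U)) powr (1 / \<gamma>)) powr \<gamma>"
    using x assms by (intro powr_mono2) (auto simp: x_def)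
  also have "\<dots> = a / (2 * U)" using a assms by (simp add: powr_powr)
  finally have "U * x powr \<gamma> \<le> a / 2" using assms by (simp add: field_simps)
  with le[OF x] a show False by simp
qed

lemma sqr_le_mult_sqr_if_powr_minus_half_le:
  fixes n :: nat and c m :: real
  assumes "1 \<le> n" "0 \<le> c" "c * real n powr (-1/2) \<le> m"
  shows "c\<^sup>2 \<le> real n * m\<^sup>2"
proof -
  have n: "real n > 0" using assms by simp
  have "(real n powr (-1/2))\<^sup>2 = 1 / real n"
    using n by (simp add: power2_eq_square flip: powr_add)
  moreover have "(c * real n powr (-1/2))\<^sup>2 \<le> m\<^sup>2"
    using assms by (intro power_mono) auto
  ultimately have "c\<^sup>2 / real n \<le> m\<^sup>2" by (simp add: power_mult_distrib)
  thus ?thesis using n by (simp add: field_simps)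
qed

lemma powr_sandwich_comparable:
  fixes g :: "real \<Rightarrow> real"
  assumes "U > 0" "\<gamma> > 0" "c > 0" "z \<ge> 0" "c * z \<le> w"
    and "g z \<le> U * z powr \<gamma>" "w powr \<gamma> / U \<le> g w"
  shows "c powr \<gamma> * g z \<le> U\<^sup>2 * g w"
proof -
  have "c powr \<gamma> * g z \<le> c powr \<gamma> * (U * z powr \<gamma>)" using assms by (intro mult_left_mono) auto
  also have "\<dots> = U * (c * z) powr \<gamma>" using assms by (simp add: powr_mult)
  also have "\<dots> \<le> U * w powr \<gamma>" using assms by (intro mult_left_mono powr_mono2) auto
  also have "\<dots> \<le> U\<^sup>2 * g w" using assms by (simp add: power2_eq_square field_simps)
  finally show ?thesis .
qed

section \<open>Probability bounds on the sample space\<close>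

lemma PiM_components_indep:
  assumes "prob_space P" "I \<noteq> {}" "finite I"
  shows "prob_space.indep_vars (PiM I (\<lambda>_. P)) (\<lambda>_. P) (\<lambda>i s. s i) I"
proof -
  interpret M: prob_space "PiM I (\<lambda>_. P)" using assms by (intro prob_space_PiM) auto
  have "distr (PiM I (\<lambda>_. P)) (PiM I (\<lambda>_. P)) (\<lambda>x. \<lambda>i\<in>I. x i) = PiM I (\<lambda>_. P)"
    by (subst distr_cong[where g="\<lambda>x. x"])
      (auto simp: space_PiM PiE_def extensional_def restrict_def fun_eq_iff)
  also have "\<dots> = PiM I (\<lambda>i. distr (PiM I (\<lambda>_. P)) P (\<lambda>x. x i))"
    using assms by (intro PiM_cong refl distr_PiM_component[symmetric]) auto
  finally show ?thesis
    using assms by (subst M.indep_vars_iff_distr_eq_PiM') auto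
qed

lemma card_eq_sum_indicator:
  fixes n :: nat
  shows "real (card {i. i < n \<and> s i \<in> W}) = (\<Sum>i<n. indicator W (s i) :: real)"
proof -
  have "{..<n} \<inter> {i. s i \<in> W} = {i. i < n \<and> s i \<in> W}" by auto
  thus ?thesis by (simp add: indicator_def)
qed

lemma PiM_frequency_deviation_sets:
  assumes "W \<in> sets P"
  shows "{s \<in> space (PiM {..<n} (\<lambda>_. P)).
            \<tau> \<le> \<bar>real (card {i. i < n \<and> s i \<in> W}) / real n - c\<bar>} \<in> sets (PiM {..<n} (\<lambda>_. P))"
  unfolding card_eq_sum_indicator using assms by measurable

lemma PiM_frequency_hoeffding:
  assumes P: "prob_space P" and W: "W \<in> sets P" and n: "1 \<le> n" and \<tau>: "0 \<le> \<tau>"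
  shows "measure (PiM {..<n} (\<lambda>_. P)) {s \<in> space (PiM {..<n} (\<lambda>_. P)).
           \<tau> \<le> \<bar>real (card {i. i < n \<and> s i \<in> W}) / real n - measure P W\<bar>}
         \<le> 2 * exp (-2 * real n * \<tau>\<^sup>2)"
proof -
  let ?M = "PiM {..<n} (\<lambda>_. P)" and ?X = "\<lambda>i s. indicator W (s i) :: real"
  interpret M: prob_space ?M using P by (intro prob_space_PiM) auto
  have "M.indep_vars (\<lambda>_. borel) ?X {..<n}"
    using PiM_components_indep[OF P _ finite_lessThan] n W
    by (intro M.indep_vars_compose2[where Y="\<lambda>i. indicator W" and M'="\<lambda>_. P"])
      (auto simp: lessThan_empty_iff)
  then interpret H: Hoeffding_ineq ?M "{..<n}" ?X "\<lambda>_. 0" "\<lambda>_. 1" "\<Sum>i<n. M.expectation (?X i)"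
    by unfold_locales (auto simp: indicator_def)
  have "M.expectation (?X i) = measure P W" if "i < n" for i
  proof -
    have "M.expectation (?X i) = integral\<^sup>L (distr ?M P (\<lambda>s. s i)) (indicator W)"
      using W that by (subst integral_distr) auto
    also have "distr ?M P (\<lambda>s. s i) = P" using P that by (intro distr_PiM_component) auto
    finally show ?thesis using W by simp
  qed
  hence mean: "(\<Sum>i<n. M.expectation (?X i)) = n * measure P W" by simp
  have dev: "\<bar>c - n * m\<bar> \<ge> n * \<tau> \<longleftrightarrow> \<bar>c / n - m\<bar> \<ge> \<tau>" for c m :: real
  proof -
    have "c - n * m = n * (c / n - m)" using n by (simp add: field_simps)
    hence "\<bar>c - n * m\<bar> = n * \<bar>c / n - m\<bar>" by (simp add: abs_mult)
    thus ?thesis using n by simp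
  qed
  have "M.prob {s \<in> space ?M. \<bar>(\<Sum>i<n. ?X i s) - n * measure P W\<bar> \<ge> n * \<tau>}
        \<le> 2 * exp (-2 * (n * \<tau>)\<^sup>2 / (\<Sum>i<n. (1 - 0)\<^sup>2))"
    using H.Hoeffding_ineq_abs_ge[of "n * \<tau>"] \<tau> mean n by simp
  also have "-2 * (n * \<tau>)\<^sup>2 / (\<Sum>i<n. (1 - 0)\<^sup>2) = -2 * real n * \<tau>\<^sup>2"
    using n by (simp add: power2_eq_square)
  also have "{s \<in> space ?M. \<bar>(\<Sum>i<n. ?X i s) - n * measure P W\<bar> \<ge> n * \<tau>}
      = {s \<in> space ?M. \<tau> \<le> \<bar>real (card {i. i < n \<and> s i \<in> W}) / real n - measure P W\<bar>}"
    by (simp only: dev card_eq_sum_indicator)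
  finally show ?thesis .
qed

lemma outer_prob_leI: "A \<inter> space M \<subseteq> F \<Longrightarrow> F \<in> sets M \<Longrightarrow> measure M F \<le> b \<Longrightarrow> outer_prob_le M A b"
  unfolding outer_prob_le_def by blast

lemma outer_prob_le_mono:
  "outer_prob_le M B b \<Longrightarrow> A \<inter> space M \<subseteq> B \<Longrightarrow> b \<le> c \<Longrightarrow> outer_prob_le M A c"
  unfolding outer_prob_le_def by (meson inf.bounded_iff inf_le2 order_trans)

lemma outer_prob_le_Un:
  assumes "outer_prob_le M A a" "outer_prob_le M B b"
  shows "outer_prob_le M (A \<union> B) (a + b)"
proof -
  obtain F G where "F \<in> sets M" "A \<inter> space M \<subseteq> F" "measure M F \<le> a"
    and "G \<in> sets M" "B \<inter> space M \<subseteq> G" "measure M G \<le> b"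
    using assms unfolding outer_prob_le_def by blast
  moreover have "measure M (F \<union> G) \<le> measure M F + measure M G"
    using \<open>F \<in> sets M\<close> \<open>G \<in> sets M\<close> by (rule measure_Un_le)
  ultimately show ?thesis by (intro outer_prob_leI[of _ _ "F \<union> G"]) auto
qed

lemma outer_prob_le_UN_list:
  assumes "\<And>p. p \<in> set ps \<Longrightarrow> outer_prob_le M (A p) (b p)"
  shows "outer_prob_le M (\<Union>p\<in>set ps. A p) (\<Sum>p\<leftarrow>ps. b p)"
  using assms
proof (induction ps)
  case Nil
  show ?case by (intro outer_prob_leI[of _ _ "{}"]) auto
next
  case (Cons p ps)
  hence "outer_prob_le M (A p \<union> (\<Union>q\<in>set ps. A q)) (b p + (\<Sum>q\<leftarrow>ps. b q))"
    by (intro outer_prob_le_Un) auto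
  thus ?case by simp
qed

lemma outer_prob_le_AE:
  assumes "AE x in M. x \<notin> A"
  shows "outer_prob_le M A 0"
proof -
  obtain N where "{x \<in> space M. \<not> x \<notin> A} \<subseteq> N" "emeasure M N = 0" "N \<in> sets M"
    using assms by (rule AE_E)
  thus ?thesis by (intro outer_prob_leI[of _ _ N]) (auto simp: measure_def)
qed

section \<open>Population disparities\<close>

definition group_threshold :: "('x \<times> bool \<times> bool) measure \<Rightarrow> bool \<Rightarrow> real \<Rightarrow> real" where
  "group_threshold P a t = 1/2 + sgnA a * t / (2 * pA P a)"

definition group_mass :: "('x \<times> bool \<times> bool) measure \<Rightarrow> bool \<Rightarrow> 'x set \<Rightarrow> real" where
  "group_mass P a S = measure P {w \<in> space P. fst w \<in> S \<and> fst (snd w) = a}"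

locale fair_population =
  fixes P :: "('x::euclidean_space \<times> bool \<times> bool) measure" and \<eta> :: "bool \<Rightarrow> 'x \<Rightarrow> real"
  assumes prob_space_P: "prob_space P"
    and sets_P: "sets P = sets (borel \<Otimes>\<^sub>M count_space UNIV \<Otimes>\<^sub>M count_space UNIV)"
    and pA_pos: "\<And>a. pA P a > 0"
    and regression: "is_regression P \<eta>"
begin

interpretation prob_space P by (rule prob_space_P)

lemma fst_measurable: "fst \<in> measurable P borel"
  using measurable_cong_sets[OF sets_P refl, of borel] by (metis measurable_fst)

lemma group_measurable: "(\<lambda>w. fst (snd w)) \<in> measurable P (count_space UNIV)"
  by (subst measurable_cong_sets[OF sets_P refl]) measurable

lemma eta_measurable: "\<eta> a \<in> borel_measurable borel"
  and eta_nonneg: "0 \<le> \<eta> a x" and eta_le_1: "\<eta> a x \<le> 1"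
  using regression unfolding is_regression_def by blast+

lemma group_event_sets:
  assumes "S \<in> sets borel"
  shows "{w \<in> space P. fst w \<in> S \<and> fst (snd w) = a} \<in> sets P"
proof -
  have "{w \<in> space P. fst w \<in> S \<and> fst (snd w) = a}
      = (fst -` S \<inter> space P) \<inter> ((\<lambda>w. fst (snd w)) -` {a} \<inter> space P)" by auto
  also have "\<dots> \<in> sets P"
    using measurable_sets[OF fst_measurable assms] measurable_sets[OF group_measurable, of "{a}"] by auto
  finally show ?thesis .
qed

lemma eta_greater_sets: "{x. c < \<eta> a x} \<in> sets borel"
  and eta_atLeast_sets: "{x. c \<le> \<eta> a x} \<in> sets borel"
proof -
  have "{x \<in> space borel. c < \<eta> a x} \<in> sets borel" "{x \<in> space borel. c \<le> \<eta> a x} \<in> sets borel"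
    using eta_measurable[of a] by measurable
  thus "{x. c < \<eta> a x} \<in> sets borel" "{x. c \<le> \<eta> a x} \<in> sets borel" by simp_all
qed

lemma group_mass_mono: "S \<subseteq> S' \<Longrightarrow> S' \<in> sets borel \<Longrightarrow> group_mass P a S \<le> group_mass P a S'"
  unfolding group_mass_def by (intro finite_measure_mono group_event_sets) auto

lemma pA_eq_group_mass: "pA P a = group_mass P a UNIV"
  by (simp add: pA_def group_mass_def)

lemma pA_le_1: "pA P a \<le> 1"
  by (simp add: pA_def)

lemma group_mass_le_pA: "group_mass P a S \<le> pA P a"
  unfolding pA_eq_group_mass group_mass_def by (intro finite_measure_mono group_event_sets) auto

lemma condX_eq: "condX P a S = group_mass P a S / pA P a"
  by (simp add: condX_def group_mass_def)

lemma condX_mono: "S \<subseteq> S' \<Longrightarrow> S' \<in> sets borel \<Longrightarrow> condX P a S \<le> condX P a S'"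
  unfolding condX_eq using pA_pos[of a] by (intro divide_right_mono group_mass_mono) auto

lemma condX_UNIV: "condX P a UNIV = 1"
  using pA_pos[of a] by (simp add: condX_eq flip: pA_eq_group_mass)

lemma condX_empty: "condX P a {} = 0"
  by (simp add: condX_eq group_mass_def)

lemma threshold_True: "group_threshold P True t = 1/2 + t / (2 * pA P True)"
  and threshold_False: "group_threshold P False t = 1/2 - t / (2 * pA P False)"
  by (simp_all add: group_threshold_def sgnA_def)

lemma threshold_True_strict_mono: "t < t' \<Longrightarrow> group_threshold P True t < group_threshold P True t'"
  and threshold_False_strict_antimono: "t < t' \<Longrightarrow> group_threshold P False t' < group_threshold P False t"
  unfolding threshold_True threshold_False using pA_pos by (simp_all add: divide_strict_right_mono)

lemma threshold_True_mono: "t \<le> t' \<Longrightarrow> group_threshold P True t \<le> group_threshold P True t'"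
  and threshold_False_antimono: "t \<le> t' \<Longrightarrow> group_threshold P False t' \<le> group_threshold P False t"
  using threshold_True_strict_mono threshold_False_strict_antimono by (auto simp: le_less)

lemma Dm_threshold: "Dm P \<eta> t = condX P True {x. \<eta> True x > group_threshold P True t}
                                - condX P False {x. \<eta> False x \<ge> group_threshold P False t}"
  and Dp_threshold: "Dp P \<eta> t = condX P True {x. \<eta> True x \<ge> group_threshold P True t}
                                - condX P False {x. \<eta> False x > group_threshold P False t}"
  by (simp_all add: Dm_def Dp_def threshold_True threshold_False)

lemma Dm_antimono: "t \<le> t' \<Longrightarrow> Dm P \<eta> t' \<le> Dm P \<eta> t"
  unfolding Dm_threshold
  using threshold_True_mono[of t t'] threshold_False_antimono[of t t']
  by (intro diff_mono condX_mono eta_greater_sets eta_atLeast_sets) auto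

lemma Dp_antimono: "t \<le> t' \<Longrightarrow> Dp P \<eta> t' \<le> Dp P \<eta> t"
  unfolding Dp_threshold
  using threshold_True_mono[of t t'] threshold_False_antimono[of t t']
  by (intro diff_mono condX_mono eta_greater_sets eta_atLeast_sets) auto

lemma Dm_le_Dp: "Dm P \<eta> t \<le> Dp P \<eta> t"
  unfolding Dm_threshold Dp_threshold
  by (intro diff_mono condX_mono eta_atLeast_sets) auto

lemma Dp_le_Dm_of_less: "t' < t \<Longrightarrow> Dp P \<eta> t \<le> Dm P \<eta> t'"
  unfolding Dm_threshold Dp_threshold
  using threshold_True_strict_mono[of t' t] threshold_False_strict_antimono[of t' t]
  by (intro diff_mono condX_mono eta_greater_sets) auto

lemma thresholds_outside_unit_interval:
  assumes "t > 1"
  shows "group_threshold P True t > 1" "group_threshold P False t < 0"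
proof -
  have "t / (2 * pA P a) > 1/2" for a
    using assms pA_le_1[of a] pA_pos[of a] by (simp add: field_simps)
  from this[of True] this[of False]
  show "group_threshold P True t > 1" "group_threshold P False t < 0"
    unfolding threshold_True threshold_False by linarith+
qed

lemma Dm_eq_minus_1: "t > 1 \<Longrightarrow> Dm P \<eta> t = -1"
  and Dp_eq_minus_1: "t > 1 \<Longrightarrow> Dp P \<eta> t = -1"
proof -
  assume "t > 1"
  have "\<eta> True x < group_threshold P True t" "group_threshold P False t < \<eta> False x" for x
    using thresholds_outside_unit_interval[OF \<open>t > 1\<close>] eta_le_1[of True x] eta_nonneg[of False x]
    by linarith+
  hence "{x. \<eta> True x > group_threshold P True t} = {}" "{x. \<eta> True x \<ge> group_threshold P True t} = {}"
    "{x. \<eta> False x \<ge> group_threshold P False t} = UNIV" "{x. \<eta> False x > group_threshold P False t} = UNIV"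
    by (auto simp: not_less not_le less_imp_le)
  thus "Dm P \<eta> t = -1" "Dp P \<eta> t = -1"
    by (simp_all add: Dm_threshold Dp_threshold condX_empty condX_UNIV)
qed

end

section \<open>The margin condition and the population level \<open>t\<^sup>\<star>\<close>\<close>

locale margin_population = fair_population +
  fixes \<delta> \<gamma> e0 U :: real
  assumes delta_nonneg: "0 \<le> \<delta>" and gamma_pos: "0 < \<gamma>" and e0_pos: "e0 > 0" and U_pos: "U > 0"
    and margin: "\<And>\<epsilon>. 0 < \<epsilon> \<Longrightarrow> \<epsilon> < e0 \<Longrightarrow>
        max (gm P \<eta> \<delta> \<epsilon>) (gp P \<eta> \<delta> \<epsilon>) \<le> U * \<epsilon> powr \<gamma>
      \<and> (Dm P \<eta> (tstar P \<eta> \<delta>) = \<delta> \<longrightarrow> gm P \<eta> \<delta> \<epsilon> \<ge> \<epsilon> powr \<gamma> / U)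
      \<and> (Dp P \<eta> (tstar P \<eta> \<delta>) = \<delta> \<longrightarrow> gp P \<eta> \<delta> \<epsilon> \<ge> \<epsilon> powr \<gamma> / U)"
begin

abbreviation "T \<equiv> tstar P \<eta> \<delta>"

lemma gm_le_powr: "0 < x \<Longrightarrow> x < e0 \<Longrightarrow> gm P \<eta> \<delta> x \<le> U * x powr \<gamma>"
  and gp_le_powr: "0 < x \<Longrightarrow> x < e0 \<Longrightarrow> gp P \<eta> \<delta> x \<le> U * x powr \<gamma>"
  and gm_ge_powr: "0 < x \<Longrightarrow> x < e0 \<Longrightarrow> Dm P \<eta> T = \<delta> \<Longrightarrow> x powr \<gamma> / U \<le> gm P \<eta> \<delta> x"
  and gp_ge_powr: "0 < x \<Longrightarrow> x < e0 \<Longrightarrow> Dp P \<eta> T = \<delta> \<Longrightarrow> x powr \<gamma> / U \<le> gp P \<eta> \<delta> x"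
  using margin[of x] by auto

lemma gm_mono: "x \<le> y \<Longrightarrow> gm P \<eta> \<delta> x \<le> gm P \<eta> \<delta> y"
  and gp_mono: "x \<le> y \<Longrightarrow> gp P \<eta> \<delta> x \<le> gp P \<eta> \<delta> y"
  unfolding gm_def gp_def using Dm_antimono[of "T + x" "T + y"] Dp_antimono[of "T - y" "T - x"] by simp_all

lemma gm_nonneg: "0 \<le> x \<Longrightarrow> 0 \<le> gm P \<eta> \<delta> x"
  and gp_nonneg: "0 \<le> x \<Longrightarrow> 0 \<le> gp P \<eta> \<delta> x"
  using gm_mono[of 0 x] gp_mono[of 0 x] by (simp_all add: gm_def gp_def)

lemma gm_pos: "0 < x \<Longrightarrow> x < e0 \<Longrightarrow> Dm P \<eta> T = \<delta> \<Longrightarrow> 0 < gm P \<eta> \<delta> x"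
  and gp_pos: "0 < x \<Longrightarrow> x < e0 \<Longrightarrow> Dp P \<eta> T = \<delta> \<Longrightarrow> 0 < gp P \<eta> \<delta> x"
  using gm_ge_powr[of x] gp_ge_powr[of x] U_pos
  by (auto intro: less_le_trans[rotated] simp: divide_pos_pos)

lemma tstar_eq_Inf: "Dm P \<eta> 0 > \<delta> \<Longrightarrow> T = Inf {t. Dm P \<eta> t < \<delta>}"
  and tstar_eq_0: "\<not> Dm P \<eta> 0 > \<delta> \<Longrightarrow> T = 0"
  by (simp_all add: tstar_def)

lemma sublevel_nonneg: "Dm P \<eta> 0 > \<delta> \<Longrightarrow> Dm P \<eta> t < \<delta> \<Longrightarrow> t \<ge> 0"
  using Dm_antimono[of t 0] by fastforce

lemma sublevel_bdd_below: "Dm P \<eta> 0 > \<delta> \<Longrightarrow> bdd_below {t. Dm P \<eta> t < \<delta>}"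
  using sublevel_nonneg by (auto intro!: bdd_belowI[where m=0])

lemma sublevel_nonempty: "2 \<in> {t. Dm P \<eta> t < \<delta>}"
  using Dm_eq_minus_1[of 2] delta_nonneg by simp

lemma tstar_nonneg: "T \<ge> 0"
  using sublevel_nonempty sublevel_nonneg
  by (cases "Dm P \<eta> 0 > \<delta>") (auto simp: tstar_eq_Inf tstar_eq_0 intro!: cInf_greatest)

lemma Dm_le_delta_after_tstar: "t > T \<Longrightarrow> Dm P \<eta> t \<le> \<delta>"
proof (cases "Dm P \<eta> 0 > \<delta>")
  case True
  assume "t > T"
  then obtain s where "Dm P \<eta> s < \<delta>" "s < t"
    using cInf_less_iff[OF _ sublevel_bdd_below[OF True]] sublevel_nonempty tstar_eq_Inf[OF True]
    by auto
  thus ?thesis using Dm_antimono[of s t] by simp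
qed (use Dm_antimono[of 0 t] tstar_eq_0 in auto)

lemma Dm_tstar_le: "Dm P \<eta> T \<le> \<delta>"
proof -
  have "Dm P \<eta> T - \<delta> \<le> 0"
  proof (rule nonpos_if_le_powr_near_zero[OF e0_pos U_pos gamma_pos])
    fix x assume x: "0 < x" "x < e0"
    have "Dm P \<eta> T = Dm P \<eta> (T + x) + gm P \<eta> \<delta> x" by (simp add: gm_def)
    thus "Dm P \<eta> T - \<delta> \<le> U * x powr \<gamma>"
      using Dm_le_delta_after_tstar[of "T + x"] gm_le_powr[OF x] x by simp
  qed
  thus ?thesis by simp
qed

lemma tstar_pos_iff: "T > 0 \<longleftrightarrow> Dm P \<eta> 0 > \<delta>"
proof
  show "T > 0 \<Longrightarrow> Dm P \<eta> 0 > \<delta>" using tstar_eq_0 by fastforce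
  assume "Dm P \<eta> 0 > \<delta>"
  hence "T \<noteq> 0" using Dm_tstar_le by auto
  thus "T > 0" using tstar_nonneg by simp
qed

lemma Dm_ge_delta_before_tstar: "0 \<le> t \<Longrightarrow> t < T \<Longrightarrow> Dm P \<eta> t \<ge> \<delta>"
  using tstar_pos_iff tstar_eq_Inf cInf_lower[OF _ sublevel_bdd_below, of t]
  by (metis linorder_not_le mem_Collect_eq order.strict_trans1)

lemma Dp_tstar_ge: "T > 0 \<Longrightarrow> Dp P \<eta> T \<ge> \<delta>"
proof -
  assume T: "T > 0"
  have "\<delta> - Dp P \<eta> T \<le> 0"
  proof (rule nonpos_if_le_powr_near_zero[of "min e0 T", OF _ U_pos gamma_pos])
    show "min e0 T > 0" using T e0_pos by simp
    fix x assume x: "0 < x" "x < min e0 T"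
    have "Dp P \<eta> T = Dp P \<eta> (T - x) - gp P \<eta> \<delta> x" by (simp add: gp_def)
    moreover have "\<delta> \<le> Dp P \<eta> (T - x)"
      using Dm_ge_delta_before_tstar[of "T - x"] Dm_le_Dp[of "T - x"] x by simp
    ultimately show "\<delta> - Dp P \<eta> T \<le> U * x powr \<gamma>" using gp_le_powr[of x] x by simp
  qed
  thus ?thesis by simp
qed

lemma gm_comparable:
  assumes "0 < z" "z < e0" "w < e0" "c > 0" "c * z \<le> w" "Dm P \<eta> T = \<delta>"
  shows "c powr \<gamma> * gm P \<eta> \<delta> z \<le> U\<^sup>2 * gm P \<eta> \<delta> w"
  using assms less_le_trans[OF mult_pos_pos[of c z]]
  by (intro powr_sandwich_comparable[where g="gm P \<eta> \<delta>", OF U_pos gamma_pos] gm_le_powr gm_ge_powr)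
    auto

lemma gp_comparable:
  assumes "0 < z" "z < e0" "w < e0" "c > 0" "c * z \<le> w" "Dp P \<eta> T = \<delta>"
  shows "c powr \<gamma> * gp P \<eta> \<delta> z \<le> U\<^sup>2 * gp P \<eta> \<delta> w"
  using assms less_le_trans[OF mult_pos_pos[of c z]]
  by (intro powr_sandwich_comparable[where g="gp P \<eta> \<delta>", OF U_pos gamma_pos] gp_le_powr gp_ge_powr)
    auto

end

section \<open>The empirical disparity\<close>

definition group_count :: "nat \<Rightarrow> (nat \<Rightarrow> 'x \<times> bool \<times> bool) \<Rightarrow> bool \<Rightarrow> 'x set \<Rightarrow> nat" where
  "group_count n s a S = card {i. i < n \<and> fst (snd (s i)) = a \<and> fst (s i) \<in> S}"

definition empirical_threshold :: "nat \<Rightarrow> (nat \<Rightarrow> 'x \<times> bool \<times> bool) \<Rightarrow> bool \<Rightarrow> real \<Rightarrow> real" where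
  "empirical_threshold n s a t = 1/2 + sgnA a * t / (2 * (real (ncount n s a) / real n))"

lemma sgnA_simps [simp]: "sgnA True = 1" "sgnA False = -1"
  by (simp_all add: sgnA_def)

lemma group_count_UNIV: "group_count n s a UNIV = ncount n s a"
  by (simp add: group_count_def ncount_def)

lemma group_count_mono_on_sample:
  assumes "\<And>i. i < n \<Longrightarrow> fst (snd (s i)) = a \<Longrightarrow> fst (s i) \<in> S \<Longrightarrow> fst (s i) \<in> S'"
  shows "group_count n s a S \<le> group_count n s a S'"
  unfolding group_count_def by (rule card_mono) (use assms in auto)

lemma group_count_sandwich:
  fixes f g :: "'x \<Rightarrow> real"
  assumes close: "\<And>i. i < n \<Longrightarrow> fst (snd (s i)) = a \<Longrightarrow> \<bar>f (fst (s i)) - g (fst (s i))\<bar> \<le> e"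
    and "lo \<le> c - e" "c + e \<le> hi"
  shows "group_count n s a {x. hi < g x} \<le> group_count n s a {x. c < f x}"
    and "group_count n s a {x. c < f x} \<le> group_count n s a {x. lo < g x}"
  using assms by (auto intro!: group_count_mono_on_sample dest!: close simp: abs_le_iff)

lemma sum_indicator_group_eq_group_count:
  fixes s :: "nat \<Rightarrow> 'x \<times> bool \<times> bool" and f :: "'x \<Rightarrow> real"
  shows "(\<Sum>i\<in>{i. i < n \<and> fst (snd (s i)) = a}. if c < f (fst (s i)) then 1 else 0 :: real)
    = group_count n s a {x. c < f x}"
proof -
  have "{i. i < n \<and> fst (snd (s i)) = a} \<inter> {i. c < f (fst (s i))}
      = {i. i < n \<and> fst (snd (s i)) = a \<and> fst (s i) \<in> {x. c < f x}}" by auto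
  thus ?thesis by (simp add: sum.If_cases group_count_def)
qed

lemma Dhat_eq_group_ratios:
  assumes "n > 0"
  shows "Dhat eh n s t =
      group_count n s True {x. empirical_threshold n s True t < eh n True s x} / ncount n s True
    - group_count n s False {x. empirical_threshold n s False t < eh n False s x} / ncount n s False"
  using sum_indicator_group_eq_group_count[where n=n and s=s and a=True]
    sum_indicator_group_eq_group_count[where n=n and s=s and a=False]
  by (simp add: Dhat_def empirical_threshold_def ac_simps)

lemma Dhat_antimono:
  assumes "0 \<le> t" "t \<le> t'"
  shows "Dhat eh n s t' \<le> Dhat eh n s t"
proof -
  have "real n * t / (2 * real m) \<le> real n * t' / (2 * real m)" for m :: nat
    using assms by (intro divide_right_mono mult_left_mono) auto
  from this[of "ncount n s True"] this[of "ncount n s False"] show ?thesis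
    unfolding Dhat_def by (intro diff_mono mult_left_mono sum_mono) auto
qed

context fair_population
begin

lemma group_frequency_deviation:
  assumes S: "S \<in> sets borel" and n: "1 \<le> n" and \<tau>: "0 \<le> \<tau>"
  shows "outer_prob_le (PiM {..<n} (\<lambda>_. P))
           {s. \<tau> < \<bar>real (group_count n s a S) / n - group_mass P a S\<bar>} (2 * exp (-2 * real n * \<tau>\<^sup>2))"
proof -
  let ?M = "PiM {..<n} (\<lambda>_. P)" and ?W = "{w \<in> space P. fst w \<in> S \<and> fst (snd w) = a}"
  have W: "?W \<in> sets P" using S by (rule group_event_sets)
  have "card {i. i < n \<and> s i \<in> ?W} = group_count n s a S" if "s \<in> space ?M" for s
  proof -
    have "s i \<in> space P" if "i < n" for i using \<open>s \<in> space ?M\<close> that by (auto simp: space_PiM)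
    thus ?thesis unfolding group_count_def by (intro arg_cong[where f=card]) auto
  qed
  hence "{s. \<tau> < \<bar>real (group_count n s a S) / n - group_mass P a S\<bar>} \<inter> space ?M
      \<subseteq> {s \<in> space ?M. \<tau> \<le> \<bar>real (card {i. i < n \<and> s i \<in> ?W}) / real n - measure P ?W\<bar>}"
    by (auto simp: group_mass_def)
  thus ?thesis
    using PiM_frequency_deviation_sets[OF W] PiM_frequency_hoeffding[OF prob_space_P W n \<tau>]
    by (intro outer_prob_leI)
qed

lemma group_mass_nonneg: "0 \<le> group_mass P a S"
  by (simp add: group_mass_def)

lemma group_ratio_close:
  assumes "1 \<le> n" "\<bar>real (ncount n s a) / n - pA P a\<bar> \<le> \<tau>" "\<tau> \<le> pA P a / 2"
    and "\<bar>real (group_count n s a S) / n - group_mass P a S\<bar> \<le> \<tau>"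
  shows "\<bar>real (group_count n s a S) / real (ncount n s a) - condX P a S\<bar> \<le> 4 * \<tau> / pA P a"
proof -
  have eq: "real (group_count n s a S) / real (ncount n s a)
      = (real (group_count n s a S) / n) / (real (ncount n s a) / n)"
    using assms by simp
  show ?thesis
    unfolding condX_eq eq by (rule ratio_perturbation[OF pA_pos group_mass_nonneg group_mass_le_pA assms(2-4)])
qed

lemma threshold_sandwich:
  assumes "1 \<le> n" "0 < pm" "pm \<le> pA P a"
    and "\<bar>real (ncount n s a) / n - pA P a\<bar> \<le> \<tau>" "\<tau> \<le> pA P a / 2"
    and "0 \<le> t" "t \<le> B" "0 \<le> e" "2 * e + 2 * B * \<tau> / pm \<le> \<kappa>"
  shows "group_threshold P a (t - sgnA a * \<kappa>) \<le> empirical_threshold n s a t - e"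
    and "empirical_threshold n s a t + e \<le> group_threshold P a (t + sgnA a * \<kappa>)"
  using threshold_perturbation[OF assms(2,3) pA_le_1 assms(4-9)]
  by (cases a; simp add: threshold_True threshold_False empirical_threshold_def)+

text \<open>On the sample, the empirical level set of \<open>\<eta>\<^sub>a\<close> is squeezed between two population level
  sets; the shift \<open>\<kappa>\<close> absorbs both the estimation error of \<open>\<eta>\<close> and that of \<open>p\<^sub>a\<close>.\<close>

lemma group_rate_bounds:
  assumes n: "1 \<le> n" and pm: "0 < pm" "pm \<le> pA P a"
    and q: "\<bar>real (ncount n s a) / n - pA P a\<bar> \<le> \<tau>" and \<tau>: "\<tau> \<le> pm / 2"
    and t: "0 \<le> t" "t \<le> B" and e: "0 \<le> e" and \<kappa>: "2 * e + 2 * B * \<tau> / pm \<le> \<kappa>"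
    and close: "\<And>i. i < n \<Longrightarrow> fst (snd (s i)) = a \<Longrightarrow> \<bar>eh n a s (fst (s i)) - \<eta> a (fst (s i))\<bar> \<le> e"
    and freq: "\<And>u. u \<in> {t - \<kappa>, t + \<kappa>} \<Longrightarrow>
      \<bar>real (group_count n s a {x. \<eta> a x > group_threshold P a u}) / n
        - group_mass P a {x. \<eta> a x > group_threshold P a u}\<bar> \<le> \<tau>"
  defines "rate \<equiv> real (group_count n s a {x. empirical_threshold n s a t < eh n a s x}) / ncount n s a"
  shows "condX P a {x. \<eta> a x > group_threshold P a (t + sgnA a * \<kappa>)} - 4 * \<tau> / pm \<le> rate"
    and "rate \<le> condX P a {x. \<eta> a x > group_threshold P a (t - sgnA a * \<kappa>)} + 4 * \<tau> / pm"
proof -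
  have \<tau>': "\<tau> \<le> pA P a / 2" using \<tau> pm by linarith
  note sandwich = threshold_sandwich[OF n pm q \<tau>' t e \<kappa>]
  have ratio: "\<bar>real (group_count n s a {x. \<eta> a x > group_threshold P a u}) / ncount n s a
                 - condX P a {x. \<eta> a x > group_threshold P a u}\<bar> \<le> 4 * \<tau> / pm"
    if "u \<in> {t - sgnA a * \<kappa>, t + sgnA a * \<kappa>}" for u
  proof -
    have u: "u \<in> {t - \<kappa>, t + \<kappa>}" using that by (cases a) auto
    have "4 * \<tau> / pA P a \<le> 4 * \<tau> / pm"
      using q pm by (intro divide_left_mono) (auto intro: order_trans[OF abs_ge_zero])
    with group_ratio_close[OF n q \<tau>' freq[OF u]] show ?thesis by linarith
  qed
  have "real (ncount n s a) / n > 0" using q \<tau>' pA_pos[of a] unfolding abs_le_iff by linarith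
  hence ncount_pos: "real (ncount n s a) > 0" by (simp add: zero_less_divide_iff)
  note counts = group_count_sandwich[of n s a "eh n a s" "\<eta> a", OF close sandwich]
  have "real (group_count n s a {x. \<eta> a x > group_threshold P a (t + sgnA a * \<kappa>)}) / ncount n s a \<le> rate"
    using counts(1) ncount_pos by (simp add: rate_def divide_right_mono)
  thus "condX P a {x. \<eta> a x > group_threshold P a (t + sgnA a * \<kappa>)} - 4 * \<tau> / pm \<le> rate"
    using ratio[of "t + sgnA a * \<kappa>"] by simp
  have "rate \<le> real (group_count n s a {x. \<eta> a x > group_threshold P a (t - sgnA a * \<kappa>)}) / ncount n s a"
    using counts(2) ncount_pos by (simp add: rate_def divide_right_mono)
  thus "rate \<le> condX P a {x. \<eta> a x > group_threshold P a (t - sgnA a * \<kappa>)} + 4 * \<tau> / pm"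
    using ratio[of "t - sgnA a * \<kappa>"] by simp
qed

definition "pmin = min (pA P True) (pA P False)"

lemma pmin_pos: "pmin > 0" and pmin_le_pA: "pmin \<le> pA P a" and pmin_le_1: "pmin \<le> 1"
  using pA_pos[of True] pA_pos[of False] pA_le_1[of True] by (cases a; simp add: pmin_def)+

lemma Dhat_bounds:
  assumes n: "1 \<le> n" and t: "0 \<le> t" "t \<le> B" and \<tau>: "\<tau> \<le> pmin / 2"
    and q: "\<And>a. \<bar>real (ncount n s a) / n - pA P a\<bar> \<le> \<tau>"
    and e: "0 \<le> e" and \<kappa>: "2 * e + 2 * B * \<tau> / pmin \<le> \<kappa>"
    and close: "\<And>a i. i < n \<Longrightarrow> fst (snd (s i)) = a \<Longrightarrow> \<bar>eh n a s (fst (s i)) - \<eta> a (fst (s i))\<bar> \<le> e"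
    and freq: "\<And>a u. u \<in> {t - \<kappa>, t + \<kappa>} \<Longrightarrow>
      \<bar>real (group_count n s a {x. \<eta> a x > group_threshold P a u}) / n
        - group_mass P a {x. \<eta> a x > group_threshold P a u}\<bar> \<le> \<tau>"
  shows "Dhat eh n s t \<le> Dp P \<eta> (t - \<kappa>) + 8 / pmin * \<tau>"
    and "Dm P \<eta> (t + \<kappa>) - 8 / pmin * \<tau> \<le> Dhat eh n s t"
proof -
  note rate_True = group_rate_bounds[where a=True and eh=eh,
      OF n pmin_pos pmin_le_pA q \<tau> t e \<kappa> close[where a=True] freq[where a=True]]
  note rate_False = group_rate_bounds[where a=False and eh=eh,
      OF n pmin_pos pmin_le_pA q \<tau> t e \<kappa> close[where a=False] freq[where a=False]]
  have "condX P True {x. \<eta> True x > group_threshold P True (t - \<kappa>)}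
      \<le> condX P True {x. \<eta> True x \<ge> group_threshold P True (t - \<kappa>)}"
    "condX P False {x. \<eta> False x > group_threshold P False (t + \<kappa>)}
      \<le> condX P False {x. \<eta> False x \<ge> group_threshold P False (t + \<kappa>)}"
    by (intro condX_mono eta_atLeast_sets; force)+
  with rate_True rate_False n
  show "Dhat eh n s t \<le> Dp P \<eta> (t - \<kappa>) + 8 / pmin * \<tau>"
    and "Dm P \<eta> (t + \<kappa>) - 8 / pmin * \<tau> \<le> Dhat eh n s t"
    by (simp_all add: Dhat_eq_group_ratios Dm_threshold Dp_threshold)
qed

end

section \<open>The three-level selection rule\<close>

definition level_time :: "(real \<Rightarrow> real) \<Rightarrow> real \<Rightarrow> real" where
  "level_time D c = Inf {t. 0 \<le> t \<and> D t < c}"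

definition select_level :: "real \<Rightarrow> real \<Rightarrow> real \<Rightarrow> real \<Rightarrow> real" where
  "select_level tmid tmin tmax r =
     (if tmid - tmin \<le> r then tmin else if tmax - tmid \<le> r then tmax else tmid)"

lemma that_eq_select_level:
  "that eh n s \<delta> \<Delta> r = select_level (level_time (Dhat eh n s) \<delta>)
     (level_time (Dhat eh n s) (\<delta> + \<Delta>)) (level_time (Dhat eh n s) (\<delta> - \<Delta>)) r"
  by (simp add: that_def select_level_def level_time_def tlevel_def Let_def)

lemma select_level_cases: "select_level a b c r \<in> {a, b, c}"
  by (simp add: select_level_def)

lemma level_time_le: "0 \<le> t \<Longrightarrow> D t < c \<Longrightarrow> level_time D c \<le> t"
  unfolding level_time_def by (rule cInf_lower) (auto intro!: bdd_belowI[where m=0])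

lemma level_time_nonneg: "0 \<le> t \<Longrightarrow> D t < c \<Longrightarrow> 0 \<le> level_time D c"
  unfolding level_time_def by (rule cInf_greatest) auto

lemma level_time_ge:
  assumes D_antimono: "\<And>x y. 0 \<le> x \<Longrightarrow> x \<le> y \<Longrightarrow> D y \<le> D x"
    and "0 \<le> u" "c \<le> D u" "0 \<le> w" "D w < c"
  shows "u \<le> level_time D c"
  unfolding level_time_def
proof (rule cInf_greatest)
  show "{t. 0 \<le> t \<and> D t < c} \<noteq> {}" using assms by auto
  fix t assume t: "t \<in> {t. 0 \<le> t \<and> D t < c}"
  show "u \<le> t"
  proof (rule ccontr)
    assume "\<not> u \<le> t"
    hence "D u \<le> D t" using D_antimono[of t u] t by auto
    with t assms(3) show False by auto
  qed
qed

text \<open>The four ways in which the selection rule returns a point within \<open>\<epsilon>'\<close> of \<open>T\<close>, one for each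
  shape of a non-increasing \<open>D\<close> near \<open>T\<close>: a sharp crossing of \<open>\<delta>\<close> at \<open>T\<close> is found by the middle
  level, a flat part just left (right) of \<open>T\<close> is detected by the gap to the lower (upper) level, and
  a jump over all three levels at \<open>T\<close> is found by any of them.\<close>

locale level_selection =
  fixes D :: "real \<Rightarrow> real" and T \<epsilon>' r \<delta> \<Delta> :: real
  assumes D_antimono: "\<And>x y. 0 \<le> x \<Longrightarrow> x \<le> y \<Longrightarrow> D y \<le> D x"
    and T_nonneg: "0 \<le> T" and eps: "0 < \<epsilon>'" "\<epsilon>' \<le> r / 2" and Delta_pos: "0 < \<Delta>"
begin

lemma level_time_ge_left:
  assumes "T - \<epsilon>' \<le> 0 \<or> c \<le> D (T - \<epsilon>')" "D (T + \<epsilon>') < c"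
  shows "T - \<epsilon>' \<le> level_time D c"
proof (cases "T - \<epsilon>' \<le> 0")
  case True
  thus ?thesis using level_time_nonneg[of "T + \<epsilon>'" D c] assms T_nonneg eps by auto
next
  case False
  thus ?thesis using assms T_nonneg eps by (intro level_time_ge[OF D_antimono, where w="T + \<epsilon>'"]) auto
qed

abbreviation "selected \<equiv> select_level (level_time D \<delta>) (level_time D (\<delta> + \<Delta>)) (level_time D (\<delta> - \<Delta>)) r"

lemma selected_mid_close:
  assumes "0 \<le> T - 2 * r" "D (T + \<epsilon>') < \<delta>" "\<delta> \<le> D (T - \<epsilon>')" "D (T - 2 * r) < \<delta> + \<Delta>"
    and "\<delta> - \<Delta> \<le> D (T + 2 * r)" "0 \<le> tb" "D tb < \<delta> - \<Delta>"
  shows "\<bar>selected - T\<bar> \<le> \<epsilon>'"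
proof -
  have mid: "T - \<epsilon>' \<le> level_time D \<delta>" "level_time D \<delta> \<le> T + \<epsilon>'"
    using assms eps T_nonneg by (auto intro: level_time_le level_time_ge_left)
  have "level_time D (\<delta> + \<Delta>) \<le> T - 2 * r" "T + 2 * r \<le> level_time D (\<delta> - \<Delta>)"
    using assms eps T_nonneg by (auto intro: level_time_le level_time_ge[OF D_antimono, where w=tb])
  with mid eps have "selected = level_time D \<delta>" by (simp add: select_level_def)
  with mid show ?thesis by simp
qed

lemma selected_max_close:
  assumes "0 \<le> T - 2 * r" "D (T + \<epsilon>') < \<delta> - \<Delta>" "\<delta> - \<Delta> \<le> D (T - \<epsilon>')"
    and "D (T - 2 * r) < \<delta> + \<Delta>" "\<delta> \<le> D (T - r / 2)"
  shows "\<bar>selected - T\<bar> \<le> \<epsilon>'"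
proof -
  have max: "T - \<epsilon>' \<le> level_time D (\<delta> - \<Delta>)" "level_time D (\<delta> - \<Delta>) \<le> T + \<epsilon>'"
    using assms eps T_nonneg by (auto intro: level_time_le level_time_ge_left)
  have "level_time D (\<delta> + \<Delta>) \<le> T - 2 * r" "level_time D \<delta> \<le> T + \<epsilon>'"
    "T - r / 2 \<le> level_time D \<delta>"
    using assms eps T_nonneg Delta_pos
    by (auto intro: level_time_le level_time_ge[OF D_antimono, where w="T + \<epsilon>'"])
  with max eps have "selected = level_time D (\<delta> - \<Delta>)" by (simp add: select_level_def)
  with max show ?thesis by simp
qed

lemma selected_min_close:
  assumes "T - \<epsilon>' \<le> 0 \<or> \<delta> + \<Delta> \<le> D (T - \<epsilon>')" "D (T + \<epsilon>') < \<delta> + \<Delta>" "D (T + r / 2) < \<delta>"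
  shows "\<bar>selected - T\<bar> \<le> \<epsilon>'"
proof -
  have min: "T - \<epsilon>' \<le> level_time D (\<delta> + \<Delta>)" "level_time D (\<delta> + \<Delta>) \<le> T + \<epsilon>'"
    using assms eps T_nonneg by (auto intro: level_time_le level_time_ge_left)
  have "level_time D \<delta> \<le> T + r / 2"
    using assms eps T_nonneg by (intro level_time_le) auto
  with min eps have "selected = level_time D (\<delta> + \<Delta>)" by (simp add: select_level_def)
  with min show ?thesis by simp
qed

lemma selected_close_if_jump:
  assumes "D (T + \<epsilon>') < \<delta> - \<Delta>" "T - \<epsilon>' \<le> 0 \<or> \<delta> + \<Delta> \<le> D (T - \<epsilon>')"
  shows "\<bar>selected - T\<bar> \<le> \<epsilon>'"
proof -
  have "\<bar>level_time D c - T\<bar> \<le> \<epsilon>'" if "\<delta> - \<Delta> \<le> c" "c \<le> \<delta> + \<Delta>" for c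
  proof -
    have "level_time D c \<le> T + \<epsilon>'" using assms that eps T_nonneg by (intro level_time_le) auto
    moreover have "T - \<epsilon>' \<le> level_time D c"
      using assms that by (intro level_time_ge_left) auto
    ultimately show ?thesis by simp
  qed
  from this[of \<delta>] this[of "\<delta> + \<Delta>"] this[of "\<delta> - \<Delta>"] Delta_pos
    select_level_cases[of "level_time D \<delta>" "level_time D (\<delta> + \<Delta>)" "level_time D (\<delta> - \<Delta>)" r]
  show ?thesis by auto
qed

end

text \<open>\<open>Dh\<close> stands for the empirical disparity on a good sample: it is only known to be non-increasing
  and to lie between shifted population disparities at seven test points around \<open>T\<close>.\<close>

locale disparity_approximation = margin_population +
  fixes Dh :: "real \<Rightarrow> real" and \<epsilon>' r \<Delta> \<kappa> k :: real
  assumes Dh_antimono: "\<And>x y. 0 \<le> x \<Longrightarrow> x \<le> y \<Longrightarrow> Dh y \<le> Dh x"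
    and Dh_bounds: "\<And>t. t \<in> {T - \<epsilon>', T + \<epsilon>', T - 2 * r, T + 2 * r, T - r / 2, T + r / 2, T + 2} \<Longrightarrow>
        0 \<le> t \<Longrightarrow> Dh t \<le> Dp P \<eta> (t - \<kappa>) + k \<and> Dm P \<eta> (t + \<kappa>) - k \<le> Dh t"
    and eps: "0 < \<epsilon>'" "\<epsilon>' \<le> r / 2"
    and kappa: "0 \<le> \<kappa>" "\<kappa> \<le> \<epsilon>' / 4"
    and r_small: "r < 1/8" "4 * r < e0" "T > 0 \<Longrightarrow> 2 * r \<le> T"
    and Delta: "0 < \<Delta>" "\<Delta> < 1/4" "2 * gm P \<eta> \<delta> (4 * r) < \<Delta>" "2 * gp P \<eta> \<delta> (4 * r) < \<Delta>"
    and k: "0 \<le> k" "k \<le> 1/4"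
begin

sublocale level_selection Dh T \<epsilon>' r \<delta> \<Delta>
  using Dh_antimono tstar_nonneg eps Delta by unfold_locales auto

lemma Dh_right_2_less: "Dh (T + 2) < \<delta> - \<Delta>"
proof -
  have "Dh (T + 2) \<le> Dp P \<eta> (T + 2 - \<kappa>) + k" using Dh_bounds[of "T + 2"] tstar_nonneg by auto
  also have "Dp P \<eta> (T + 2 - \<kappa>) = -1"
    using tstar_nonneg kappa eps r_small by (intro Dp_eq_minus_1) auto
  finally show ?thesis using k delta_nonneg Delta by simp
qed

lemma Dh_right_le: "Dh (T + \<epsilon>') \<le> Dm P \<eta> (T + \<epsilon>' / 2) + k" "Dh (T + r / 2) \<le> Dm P \<eta> (T + r / 4) + k"
proof -
  have "Dp P \<eta> (T + \<epsilon>' - \<kappa>) \<le> Dm P \<eta> (T + \<epsilon>' / 2)" "Dp P \<eta> (T + r / 2 - \<kappa>) \<le> Dm P \<eta> (T + r / 4)"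
    using kappa eps by (intro Dp_le_Dm_of_less; simp)+
  moreover have "Dh (T + \<epsilon>') \<le> Dp P \<eta> (T + \<epsilon>' - \<kappa>) + k" "Dh (T + r / 2) \<le> Dp P \<eta> (T + r / 2 - \<kappa>) + k"
    using Dh_bounds[of "T + \<epsilon>'"] Dh_bounds[of "T + r / 2"] tstar_nonneg eps by auto
  ultimately show "Dh (T + \<epsilon>') \<le> Dm P \<eta> (T + \<epsilon>' / 2) + k" "Dh (T + r / 2) \<le> Dm P \<eta> (T + r / 4) + k"
    by simp_all
qed

lemma Dh_left_ge:
  assumes "T > 0"
  shows "Dp P \<eta> (T - \<epsilon>' / 2) - k \<le> Dh (T - \<epsilon>')" "Dp P \<eta> (T - r / 4) - k \<le> Dh (T - r / 2)"
proof -
  have "Dp P \<eta> (T - \<epsilon>' / 2) \<le> Dm P \<eta> (T - \<epsilon>' + \<kappa>)" "Dp P \<eta> (T - r / 4) \<le> Dm P \<eta> (T - r / 2 + \<kappa>)"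
    using kappa eps by (intro Dp_le_Dm_of_less; simp)+
  moreover have "Dm P \<eta> (T - \<epsilon>' + \<kappa>) - k \<le> Dh (T - \<epsilon>')" "Dm P \<eta> (T - r / 2 + \<kappa>) - k \<le> Dh (T - r / 2)"
    using Dh_bounds[of "T - \<epsilon>'"] Dh_bounds[of "T - r / 2"] assms r_small eps by auto
  ultimately show "Dp P \<eta> (T - \<epsilon>' / 2) - k \<le> Dh (T - \<epsilon>')" "Dp P \<eta> (T - r / 4) - k \<le> Dh (T - r / 2)"
    by simp_all
qed

lemma Dh_left_2r_le: "T > 0 \<Longrightarrow> Dh (T - 2 * r) \<le> Dp P \<eta> T + gp P \<eta> \<delta> (4 * r) + k"
  and Dh_right_2r_ge: "Dm P \<eta> T - gm P \<eta> \<delta> (4 * r) - k \<le> Dh (T + 2 * r)"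
proof -
  have "gp P \<eta> \<delta> (2 * r + \<kappa>) \<le> gp P \<eta> \<delta> (4 * r)" "gm P \<eta> \<delta> (2 * r + \<kappa>) \<le> gm P \<eta> \<delta> (4 * r)"
    using kappa eps by (intro gp_mono gm_mono; simp)+
  moreover have "Dm P \<eta> (T + 2 * r + \<kappa>) - k \<le> Dh (T + 2 * r)"
    using Dh_bounds[of "T + 2 * r"] tstar_nonneg eps by auto
  ultimately show "Dm P \<eta> T - gm P \<eta> \<delta> (4 * r) - k \<le> Dh (T + 2 * r)"
    by (simp add: gm_def algebra_simps)
  assume "T > 0"
  hence "Dh (T - 2 * r) \<le> Dp P \<eta> (T - 2 * r - \<kappa>) + k"
    using Dh_bounds[of "T - 2 * r"] r_small by auto
  with \<open>gp P \<eta> \<delta> (2 * r + \<kappa>) \<le> gp P \<eta> \<delta> (4 * r)\<close>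
  show "Dh (T - 2 * r) \<le> Dp P \<eta> T + gp P \<eta> \<delta> (4 * r) + k"
    by (simp add: gp_def algebra_simps)
qed

lemma left_jump:
  assumes "T > 0" "k < (Dp P \<eta> T - \<delta>) / 2" "\<Delta> < (Dp P \<eta> T - \<delta>) / 2"
  shows "\<delta> + \<Delta> \<le> Dh (T - \<epsilon>')"
  using Dh_left_ge(1)[OF assms(1)] Dp_antimono[of "T - \<epsilon>' / 2" T] eps assms by simp

lemma right_jump:
  assumes "k < (\<delta> - Dm P \<eta> T) / 2" "\<Delta> < (\<delta> - Dm P \<eta> T) / 2"
  shows "Dh (T + \<epsilon>') < \<delta> - \<Delta>"
  using Dh_right_le(1) Dm_antimono[of T "T + \<epsilon>' / 2"] eps assms by simp

lemma right_touch:
  assumes "Dm P \<eta> T = \<delta>" "k \<le> gm P \<eta> \<delta> r" "k < gm P \<eta> \<delta> (r / 4)"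
  shows "Dh (T + \<epsilon>') < \<delta> + \<Delta>" "Dh (T + r / 2) < \<delta>"
proof -
  have "gm P \<eta> \<delta> r \<le> gm P \<eta> \<delta> (4 * r)" "0 \<le> gm P \<eta> \<delta> (\<epsilon>' / 2)"
    using eps by (auto intro: gm_mono gm_nonneg)
  thus "Dh (T + \<epsilon>') < \<delta> + \<Delta>" "Dh (T + r / 2) < \<delta>"
    using Dh_right_le assms Delta by (auto simp: gm_def)
qed

lemma left_touch:
  assumes "T > 0" "Dp P \<eta> T = \<delta>" "k \<le> gp P \<eta> \<delta> r" "k < gp P \<eta> \<delta> (r / 4)"
  shows "\<delta> - \<Delta> \<le> Dh (T - \<epsilon>')" "Dh (T - 2 * r) < \<delta> + \<Delta>" "\<delta> \<le> Dh (T - r / 2)"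
proof -
  have "gp P \<eta> \<delta> r \<le> gp P \<eta> \<delta> (4 * r)" "0 \<le> gp P \<eta> \<delta> (\<epsilon>' / 2)"
    using eps by (auto intro: gp_mono gp_nonneg)
  thus "\<delta> - \<Delta> \<le> Dh (T - \<epsilon>')" "Dh (T - 2 * r) < \<delta> + \<Delta>" "\<delta> \<le> Dh (T - r / 2)"
    using Dh_left_ge[OF assms(1)] Dh_left_2r_le[OF assms(1)] assms Delta by (auto simp: gp_def)
qed

lemma sharp_crossing:
  assumes "T > 0" "Dm P \<eta> T = \<delta>" "Dp P \<eta> T = \<delta>"
    and "k < gm P \<eta> \<delta> (\<epsilon>' / 2)" "k < gp P \<eta> \<delta> (\<epsilon>' / 2)" "k \<le> gm P \<eta> \<delta> (4 * r)" "k \<le> gp P \<eta> \<delta> (4 * r)"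
  shows "Dh (T + \<epsilon>') < \<delta>" "\<delta> \<le> Dh (T - \<epsilon>')" "Dh (T - 2 * r) < \<delta> + \<Delta>" "\<delta> - \<Delta> \<le> Dh (T + 2 * r)"
  using Dh_right_le(1) Dh_left_ge(1)[OF assms(1)] Dh_left_2r_le[OF assms(1)] Dh_right_2r_ge assms Delta
  by (auto simp: gm_def gp_def)

lemma selected_close:
  assumes gap_m: "Dm P \<eta> T < \<delta> \<Longrightarrow> k < (\<delta> - Dm P \<eta> T) / 2 \<and> \<Delta> < (\<delta> - Dm P \<eta> T) / 2"
    and gap_p: "T > 0 \<Longrightarrow> Dp P \<eta> T > \<delta> \<Longrightarrow> k < (Dp P \<eta> T - \<delta>) / 2 \<and> \<Delta> < (Dp P \<eta> T - \<delta>) / 2"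
    and sharp: "T > 0 \<Longrightarrow> Dm P \<eta> T = \<delta> \<Longrightarrow> Dp P \<eta> T = \<delta> \<Longrightarrow>
      k < gm P \<eta> \<delta> (\<epsilon>' / 2) \<and> k < gp P \<eta> \<delta> (\<epsilon>' / 2) \<and> k \<le> gm P \<eta> \<delta> (4 * r) \<and> k \<le> gp P \<eta> \<delta> (4 * r)"
    and touch_m: "Dm P \<eta> T = \<delta> \<Longrightarrow> \<not> (T > 0 \<and> Dp P \<eta> T = \<delta>) \<Longrightarrow> k \<le> gm P \<eta> \<delta> r \<and> k < gm P \<eta> \<delta> (r / 4)"
    and touch_p: "T > 0 \<Longrightarrow> Dp P \<eta> T = \<delta> \<Longrightarrow> Dm P \<eta> T < \<delta> \<Longrightarrow> k \<le> gp P \<eta> \<delta> r \<and> k < gp P \<eta> \<delta> (r / 4)"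
  shows "\<bar>selected - T\<bar> \<le> \<epsilon>'"
proof -
  have left_gap: "T - \<epsilon>' \<le> 0 \<or> \<delta> + \<Delta> \<le> Dh (T - \<epsilon>')" if "\<not> (T > 0 \<and> Dp P \<eta> T = \<delta>)"
    using that left_jump gap_p Dp_tstar_ge tstar_nonneg eps by force
  have T_left: "T > 0 \<Longrightarrow> 0 \<le> T - 2 * r" using r_small by simp
  consider "T > 0" "Dm P \<eta> T = \<delta>" "Dp P \<eta> T = \<delta>"
    | "Dm P \<eta> T = \<delta>" "\<not> (T > 0 \<and> Dp P \<eta> T = \<delta>)"
    | "T > 0" "Dp P \<eta> T = \<delta>" "Dm P \<eta> T < \<delta>"
    | "Dm P \<eta> T < \<delta>" "\<not> (T > 0 \<and> Dp P \<eta> T = \<delta>)"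
    using Dm_tstar_le by fastforce
  thus ?thesis
  proof cases
    case 1
    with sharp_crossing sharp show ?thesis
      using Dh_right_2_less T_left tstar_nonneg by (intro selected_mid_close[where tb="T + 2"]) auto
  next
    case 2
    with right_touch touch_m left_gap show ?thesis by (intro selected_min_close) auto
  next
    case 3
    with left_touch touch_p right_jump gap_m T_left show ?thesis
      by (intro selected_max_close) auto
  next
    case 4
    with right_jump gap_m left_gap show ?thesis by (intro selected_close_if_jump) auto
  qed
qed

end

section \<open>Estimation of \<open>t\<^sup>\<star>\<close> on a good sample\<close>

locale tstar_estimation = margin_population P \<eta> \<delta> \<gamma> e0 U
  for P :: "('x::euclidean_space \<times> bool \<times> bool) measure" and \<eta> \<delta> \<gamma> e0 U +
  fixes eh :: "nat \<Rightarrow> bool \<Rightarrow> (nat \<Rightarrow> 'x \<times> bool \<times> bool) \<Rightarrow> 'x \<Rightarrow> real"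
    and \<phi> :: "nat \<Rightarrow> bool \<Rightarrow> real" and c\<mu> c1\<eta> c2\<eta> L\<eta> U\<eta> :: real and \<Omega> :: "'x set"
  assumes c\<mu>_pos: "c\<mu> > 0" and \<phi>_pos: "\<And>n a. 1 \<le> n \<Longrightarrow> \<phi> n a > 0"
    and \<phi>_lower: "\<And>n a. 1 \<le> n \<Longrightarrow> c\<mu> * real n powr (-1/2) \<le> \<phi> n a"
    and eh_constants: "c1\<eta> > 0" "c2\<eta> > 0" "L\<eta> > 0" "U\<eta> > 0"
    and \<Omega>: "\<Omega> \<in> sets borel" "measure P {w \<in> space P. fst w \<in> \<Omega>} = 1"
    and eh_deviation: "\<And>n a \<epsilon>. 1 \<le> n \<Longrightarrow> L\<eta> * \<phi> n a < \<epsilon> \<Longrightarrow> \<epsilon> < U\<eta> \<Longrightarrow>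
        outer_prob_le (PiM {..<n} (\<lambda>_. P)) {s. \<exists>x\<in>\<Omega>. \<bar>eh n a s x - \<eta> a x\<bar> > \<epsilon>}
          (c1\<eta> * exp (- c2\<eta> * (\<epsilon> / \<phi> n a)\<^sup>2))"
begin

definition "gap_m = \<delta> - Dm P \<eta> T"
definition "gap_p = Dp P \<eta> T - \<delta>"

text \<open>\<open>g_touch \<epsilon> r\<close> is the smallest \<open>g\<^sub>\<delta>\<^sub>,\<^sub>j(\<omega>(\<epsilon>, r))\<close> over the sides \<open>j\<close> with \<open>D\<^sub>j(t\<^sup>\<star>) = \<delta>\<close>
  (and \<open>1\<close> if there is none); the Hoeffding deviation is taken proportional to \<open>min \<epsilon> (g_touch \<epsilon> r)\<close>.\<close>

definition "g_touch \<epsilon> r =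
  min (if \<delta> = Dm P \<eta> T then gm P \<eta> \<delta> (omega P \<eta> \<delta> \<epsilon> r) else 1)
      (if \<delta> = Dp P \<eta> T then gp P \<eta> \<delta> (omega P \<eta> \<delta> \<epsilon> r) else 1)"

definition "cc = min (pmin / 32) (min (pmin\<^sup>2 / (32 * (T + 2)))
  (min (if gap_m > 0 then pmin * gap_m / 32 else 1)
  (min (if T > 0 \<and> gap_p > 0 then pmin * gap_p / 32 else 1) (pmin * (pmin / 4) powr \<gamma> / (16 * U\<^sup>2)))))"

definition "U_T = min (min (1/8) (e0 / 4)) (min U\<eta> (if T > 0 then T / 4 else 1))"
definition "U_Delta = min (1/4) (min (if gap_m > 0 then gap_m / 2 else 1) (if T > 0 \<and> gap_p > 0 then gap_p / 2 else 1))"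
definition "L_T = 32 * L\<eta> / pmin"

lemma cc_pos: "cc > 0"
proof -
  have "0 < pmin\<^sup>2 / (32 * (T + 2))" "0 < pmin * (pmin / 4) powr \<gamma> / (16 * U\<^sup>2)"
    using pmin_pos U_pos tstar_nonneg by (auto intro!: divide_pos_pos mult_pos_pos)
  thus ?thesis unfolding cc_def using pmin_pos by (auto intro!: mult_pos_pos divide_pos_pos)
qed

lemma cc_le: "cc \<le> pmin / 32" "cc \<le> pmin\<^sup>2 / (32 * (T + 2))"
  "gap_m > 0 \<Longrightarrow> cc \<le> pmin * gap_m / 32" "T > 0 \<Longrightarrow> gap_p > 0 \<Longrightarrow> cc \<le> pmin * gap_p / 32"
  "cc \<le> pmin * (pmin / 4) powr \<gamma> / (16 * U\<^sup>2)"
proof -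
  show "cc \<le> pmin / 32" "cc \<le> pmin\<^sup>2 / (32 * (T + 2))"
    "cc \<le> pmin * (pmin / 4) powr \<gamma> / (16 * U\<^sup>2)"
    unfolding cc_def by (intro min.coboundedI2 min.cobounded1 min.cobounded2)+
  have "cc \<le> (if gap_m > 0 then pmin * gap_m / 32 else 1)"
    "cc \<le> (if T > 0 \<and> gap_p > 0 then pmin * gap_p / 32 else 1)"
    unfolding cc_def by (intro min.coboundedI2 min.cobounded1)+
  thus "gap_m > 0 \<Longrightarrow> cc \<le> pmin * gap_m / 32" "T > 0 \<Longrightarrow> gap_p > 0 \<Longrightarrow> cc \<le> pmin * gap_p / 32"
    by simp_all
qed

lemma deviation_small:
  assumes "0 < \<epsilon>" "\<epsilon> < 1" "\<tau> \<le> cc * \<epsilon>"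
  shows "\<tau> \<le> pmin / 2" "\<tau> \<le> pmin\<^sup>2 / (32 * (T + 2)) * \<epsilon>"
proof -
  have "cc * \<epsilon> \<le> pmin / 32 * \<epsilon>" "cc * \<epsilon> \<le> pmin\<^sup>2 / (32 * (T + 2)) * \<epsilon>"
    using cc_le(1,2) assms by (intro mult_right_mono; simp)+
  moreover have "pmin / 32 * \<epsilon> \<le> pmin / 2" using pmin_pos assms by simp
  ultimately show "\<tau> \<le> pmin / 2" "\<tau> \<le> pmin\<^sup>2 / (32 * (T + 2)) * \<epsilon>"
    using assms(3) by linarith+
qed

lemma U_T_le: "U_T \<le> 1/8" "U_T \<le> e0 / 4" "U_T \<le> U\<eta>" "T > 0 \<Longrightarrow> U_T \<le> T / 4"
proof -
  show "U_T \<le> 1/8" "U_T \<le> e0 / 4" "U_T \<le> U\<eta>"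
    unfolding U_T_def by (intro min.coboundedI1 min.coboundedI2 min.cobounded1 min.cobounded2)+
  have "U_T \<le> (if T > 0 then T / 4 else 1)"
    unfolding U_T_def by (intro min.coboundedI2 min.cobounded2)
  thus "T > 0 \<Longrightarrow> U_T \<le> T / 4" by simp
qed

lemma U_Delta_le: "U_Delta \<le> 1/4" "gap_m > 0 \<Longrightarrow> U_Delta \<le> gap_m / 2"
  "T > 0 \<Longrightarrow> gap_p > 0 \<Longrightarrow> U_Delta \<le> gap_p / 2"
proof -
  show "U_Delta \<le> 1/4" unfolding U_Delta_def by (rule min.cobounded1)
  have "U_Delta \<le> (if gap_m > 0 then gap_m / 2 else 1)"
    "U_Delta \<le> (if T > 0 \<and> gap_p > 0 then gap_p / 2 else 1)"
    unfolding U_Delta_def by (intro min.coboundedI2 min.cobounded1 min.cobounded2)+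
  thus "gap_m > 0 \<Longrightarrow> U_Delta \<le> gap_m / 2" "T > 0 \<Longrightarrow> gap_p > 0 \<Longrightarrow> U_Delta \<le> gap_p / 2"
    by simp_all
qed

lemma U_T_pos: "U_T > 0" and U_Delta_pos: "U_Delta > 0" and L_T_pos: "L_T > 0"
  unfolding U_T_def U_Delta_def L_T_def using e0_pos eh_constants pmin_pos by simp_all

lemma shift_le: "0 \<le> \<tau> \<Longrightarrow> \<tau> \<le> cc * x \<Longrightarrow> 0 \<le> x \<Longrightarrow> 8 / pmin * \<tau> \<le> x / 4"
proof -
  assume "0 \<le> \<tau>" "\<tau> \<le> cc * x" "0 \<le> x"
  moreover note cc_le(1)
  ultimately have "\<tau> \<le> pmin / 32 * x" by (meson mult_right_mono order.trans)
  thus ?thesis using pmin_pos by (simp add: field_simps)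
qed

lemma shift_le_gap:
  assumes "0 \<le> \<tau>" "\<tau> \<le> cc * \<epsilon>" "0 < \<epsilon>" "\<epsilon> < 1"
  shows "gap_m > 0 \<Longrightarrow> 8 / pmin * \<tau> < gap_m / 2" "T > 0 \<Longrightarrow> gap_p > 0 \<Longrightarrow> 8 / pmin * \<tau> < gap_p / 2"
proof -
  have "8 / pmin * \<tau> \<le> 8 / pmin * (cc * \<epsilon>)" using assms pmin_pos by (intro mult_left_mono) auto
  also have "\<dots> < 8 / pmin * cc"
    using assms cc_pos pmin_pos by (intro mult_strict_left_mono) auto
  finally have lt: "8 / pmin * \<tau> < 8 / pmin * cc" .
  have "8 / pmin * cc \<le> gap_m / 4" if "gap_m > 0"
    using cc_le(3) that pmin_pos by (simp add: field_simps)
  with lt show "gap_m > 0 \<Longrightarrow> 8 / pmin * \<tau> < gap_m / 2" by fastforce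
  have "8 / pmin * cc \<le> gap_p / 4" if "T > 0" "gap_p > 0"
    using cc_le(4) that pmin_pos by (simp add: field_simps)
  with lt show "T > 0 \<Longrightarrow> gap_p > 0 \<Longrightarrow> 8 / pmin * \<tau> < gap_p / 2" by fastforce
qed

text \<open>Via the two-sided margin condition, a shift of size \<open>g\<^sub>\<delta>(z)\<close> is dominated by \<open>g\<^sub>\<delta>\<close> at any
  point \<open>w \<ge> p\<^sub>m\<^sub>i\<^sub>n z / 4\<close>; this is where the last constraint on \<open>cc\<close> comes from.\<close>

lemma shift_less_of_comparable:
  assumes "0 \<le> \<tau>" "0 < z" "z < e0" "w < e0" "pmin / 4 * z \<le> w"
  shows "Dm P \<eta> T = \<delta> \<Longrightarrow> \<tau> \<le> cc * gm P \<eta> \<delta> z \<Longrightarrow> 8 / pmin * \<tau> < gm P \<eta> \<delta> w"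
    and "Dp P \<eta> T = \<delta> \<Longrightarrow> \<tau> \<le> cc * gp P \<eta> \<delta> z \<Longrightarrow> 8 / pmin * \<tau> < gp P \<eta> \<delta> w"
proof -
  have "0 < pmin / 4 * z" using assms pmin_pos by simp
  hence w: "0 < w" using assms by linarith
  from cc_le(5) have c: "8 / pmin * cc * U\<^sup>2 \<le> (pmin / 4) powr \<gamma> / 2"
    using pmin_pos U_pos by (simp add: field_simps)
  have key: "8 / pmin * \<tau> < g w"
    if "\<tau> \<le> cc * g z" "(pmin / 4) powr \<gamma> * g z \<le> U\<^sup>2 * g w" "0 < g w" for g :: "real \<Rightarrow> real"
  proof -
    have "0 \<le> cc * g z" using that(1) assms(1) by linarith
    hence gz: "0 \<le> g z" using cc_pos by (simp add: zero_le_mult_iff)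
    have "U\<^sup>2 * (8 / pmin * (cc * g z)) = (8 / pmin * cc * U\<^sup>2) * g z" by (simp add: ac_simps)
    also have "\<dots> \<le> (pmin / 4) powr \<gamma> / 2 * g z" using c gz by (rule mult_right_mono)
    also have "\<dots> \<le> U\<^sup>2 * (g w / 2)" using that(2) by simp
    finally have "8 / pmin * (cc * g z) \<le> g w / 2"
      using U_pos by (subst (asm) mult_le_cancel_left_pos) auto
    moreover have "8 / pmin * \<tau> \<le> 8 / pmin * (cc * g z)"
      using that(1) pmin_pos by (intro mult_left_mono) auto
    ultimately show ?thesis using that(3) by linarith
  qed
  have c_pos: "pmin / 4 > 0" using pmin_pos by simp
  show "8 / pmin * \<tau> < gm P \<eta> \<delta> w" if "Dm P \<eta> T = \<delta>" "\<tau> \<le> cc * gm P \<eta> \<delta> z"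
    by (rule key[OF that(2) gm_comparable[OF assms(2-4) c_pos assms(5) that(1)] gm_pos[OF w assms(4) that(1)]])
  show "8 / pmin * \<tau> < gp P \<eta> \<delta> w" if "Dp P \<eta> T = \<delta>" "\<tau> \<le> cc * gp P \<eta> \<delta> z"
    by (rule key[OF that(2) gp_comparable[OF assms(2-4) c_pos assms(5) that(1)] gp_pos[OF w assms(4) that(1)]])
qed

definition "test_points \<epsilon> r = [T - pmin * \<epsilon> / 2, T + pmin * \<epsilon> / 2, T - 2 * r, T + 2 * r, T - r / 2, T + r / 2, T + 2]"

definition "kappa \<tau> \<epsilon> = pmin * \<epsilon> / 16 + 2 * (T + 2) * \<tau> / pmin"

lemma shift_below_gaps:
  assumes \<epsilon>: "0 < \<epsilon>" "\<epsilon> < r" and r: "r < U_T" and \<Delta>: "\<Delta> < U_Delta"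
    and \<tau>: "0 \<le> \<tau>" "\<tau> \<le> cc * \<epsilon>"
  shows "Dm P \<eta> T < \<delta> \<Longrightarrow> 8 / pmin * \<tau> < (\<delta> - Dm P \<eta> T) / 2 \<and> \<Delta> < (\<delta> - Dm P \<eta> T) / 2"
    and "T > 0 \<Longrightarrow> Dp P \<eta> T > \<delta> \<Longrightarrow> 8 / pmin * \<tau> < (Dp P \<eta> T - \<delta>) / 2 \<and> \<Delta> < (Dp P \<eta> T - \<delta>) / 2"
proof -
  have "\<epsilon> < 1" using \<epsilon> r U_T_le(1) by linarith
  note gaps = shift_le_gap[OF \<tau> \<epsilon>(1) this]
  show "Dm P \<eta> T < \<delta> \<Longrightarrow> 8 / pmin * \<tau> < (\<delta> - Dm P \<eta> T) / 2 \<and> \<Delta> < (\<delta> - Dm P \<eta> T) / 2"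
    using gaps(1) U_Delta_le(2) \<Delta> by (auto simp: gap_m_def)
  show "T > 0 \<Longrightarrow> Dp P \<eta> T > \<delta> \<Longrightarrow> 8 / pmin * \<tau> < (Dp P \<eta> T - \<delta>) / 2 \<and> \<Delta> < (Dp P \<eta> T - \<delta>) / 2"
    using gaps(2) U_Delta_le(3) \<Delta> by (auto simp: gap_p_def)
qed

lemma shift_below_sharp_crossing:
  assumes \<epsilon>: "0 < \<epsilon>" "\<epsilon> < r" and r: "r < U_T"
    and \<tau>: "0 \<le> \<tau>" "\<tau> \<le> cc * g_touch \<epsilon> r"
    and crossing: "T > 0" "Dm P \<eta> T = \<delta>" "Dp P \<eta> T = \<delta>"
  shows "8 / pmin * \<tau> < gm P \<eta> \<delta> (pmin * \<epsilon> / 2 / 2) \<and> 8 / pmin * \<tau> < gp P \<eta> \<delta> (pmin * \<epsilon> / 2 / 2)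
      \<and> 8 / pmin * \<tau> \<le> gm P \<eta> \<delta> (4 * r) \<and> 8 / pmin * \<tau> \<le> gp P \<eta> \<delta> (4 * r)"
proof -
  have "g_touch \<epsilon> r = min (gm P \<eta> \<delta> \<epsilon>) (gp P \<eta> \<delta> \<epsilon>)"
    using crossing by (simp add: g_touch_def omega_def)
  hence \<tau>_g: "\<tau> \<le> cc * gm P \<eta> \<delta> \<epsilon>" "\<tau> \<le> cc * gp P \<eta> \<delta> \<epsilon>"
    using \<tau>(2) cc_pos by (auto intro: order_trans mult_left_mono)
  have "pmin * \<epsilon> \<le> \<epsilon>" using pmin_pos pmin_le_1 \<epsilon> by (intro mult_left_le_one_le) auto
  hence small: "pmin * \<epsilon> / 2 / 2 < e0" "\<epsilon> < e0" using \<epsilon> r U_T_le(2) by linarith+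
  have cmp: "pmin / 4 * \<epsilon> \<le> pmin * \<epsilon> / 2 / 2" by simp
  have "gm P \<eta> \<delta> \<epsilon> \<le> gm P \<eta> \<delta> (4 * r)" "gp P \<eta> \<delta> \<epsilon> \<le> gp P \<eta> \<delta> (4 * r)"
    "0 \<le> gm P \<eta> \<delta> \<epsilon>" "0 \<le> gp P \<eta> \<delta> \<epsilon>"
    using \<epsilon> by (auto intro: gm_mono gp_mono gm_nonneg gp_nonneg)
  with \<tau>_g shift_less_of_comparable[OF \<tau>(1) \<epsilon>(1) small(2,1) cmp] shift_le[OF \<tau>(1)] crossing
  show ?thesis by fastforce
qed

lemma shift_below_touching_side:
  assumes \<epsilon>: "0 < \<epsilon>" "\<epsilon> < r" and r: "r < U_T"
    and \<tau>: "0 \<le> \<tau>" "\<tau> \<le> cc * g_touch \<epsilon> r"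
  shows "Dm P \<eta> T = \<delta> \<Longrightarrow> \<not> (T > 0 \<and> Dp P \<eta> T = \<delta>) \<Longrightarrow>
      8 / pmin * \<tau> \<le> gm P \<eta> \<delta> r \<and> 8 / pmin * \<tau> < gm P \<eta> \<delta> (r / 4)"
    and "T > 0 \<Longrightarrow> Dp P \<eta> T = \<delta> \<Longrightarrow> Dm P \<eta> T < \<delta> \<Longrightarrow>
      8 / pmin * \<tau> \<le> gp P \<eta> \<delta> r \<and> 8 / pmin * \<tau> < gp P \<eta> \<delta> (r / 4)"
proof -
  have r_comparable: "0 < r" "r < e0" "r / 4 < e0" "pmin / 4 * r \<le> r / 4"
    using \<epsilon> r U_T_le(2) pmin_le_1 by (auto simp: mult_left_le_one_le)
  show "8 / pmin * \<tau> \<le> gm P \<eta> \<delta> r \<and> 8 / pmin * \<tau> < gm P \<eta> \<delta> (r / 4)"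
    if "Dm P \<eta> T = \<delta>" "\<not> (T > 0 \<and> Dp P \<eta> T = \<delta>)"
  proof -
    have "\<tau> \<le> cc * gm P \<eta> \<delta> r"
      using that \<tau>(2) cc_pos by (auto simp: g_touch_def omega_def intro: order_trans mult_left_mono)
    thus ?thesis
      using shift_less_of_comparable(1)[OF \<tau>(1) r_comparable that(1)] shift_le[OF \<tau>(1)]
        gm_nonneg[of r] r_comparable(1) by fastforce
  qed
  show "8 / pmin * \<tau> \<le> gp P \<eta> \<delta> r \<and> 8 / pmin * \<tau> < gp P \<eta> \<delta> (r / 4)"
    if "T > 0" "Dp P \<eta> T = \<delta>" "Dm P \<eta> T < \<delta>"
  proof -
    have "\<tau> \<le> cc * gp P \<eta> \<delta> r"
      using that \<tau>(2) cc_pos by (auto simp: g_touch_def omega_def intro: order_trans mult_left_mono)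
    thus ?thesis
      using shift_less_of_comparable(2)[OF \<tau>(1) r_comparable that(2)] shift_le[OF \<tau>(1)]
        gp_nonneg[of r] r_comparable(1) by fastforce
  qed
qed

lemma kappa_bounds:
  assumes "0 \<le> \<tau>" "0 < \<epsilon>" "\<epsilon> < 1" "\<tau> \<le> cc * \<epsilon>"
  shows "0 \<le> kappa \<tau> \<epsilon>" "kappa \<tau> \<epsilon> \<le> pmin * \<epsilon> / 2 / 4"
proof -
  have "2 * (T + 2) * \<tau> / pmin \<le> 2 * (T + 2) * (pmin\<^sup>2 / (32 * (T + 2)) * \<epsilon>) / pmin"
    using deviation_small(2)[OF assms(2-4)] tstar_nonneg pmin_pos
    by (intro divide_right_mono mult_left_mono) auto
  also have "\<dots> = pmin * \<epsilon> / 16"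
  proof -
    have "2 * X * (pmin\<^sup>2 / (32 * X) * \<epsilon>) / pmin = pmin * \<epsilon> / 16" if "X > 0" for X
      using that pmin_pos by (simp add: field_simps power2_eq_square)
    from this[of "T + 2"] show ?thesis using tstar_nonneg by linarith
  qed
  finally have "kappa \<tau> \<epsilon> \<le> pmin * \<epsilon> / 16 + pmin * \<epsilon> / 16"
    unfolding kappa_def by (rule add_left_mono)
  moreover have "0 \<le> kappa \<tau> \<epsilon>" using assms pmin_pos tstar_nonneg by (simp add: kappa_def)
  ultimately show "0 \<le> kappa \<tau> \<epsilon>" "kappa \<tau> \<epsilon> \<le> pmin * \<epsilon> / 2 / 4" by linarith+
qed

definition good_sample :: "nat \<Rightarrow> (nat \<Rightarrow> 'x \<times> bool \<times> bool) \<Rightarrow> real \<Rightarrow> real \<Rightarrow> real \<Rightarrow> bool" where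
  "good_sample n s \<epsilon> r \<tau> \<longleftrightarrow>
     (\<forall>a. \<bar>real (ncount n s a) / n - pA P a\<bar> \<le> \<tau>)
   \<and> (\<forall>a i. i < n \<longrightarrow> fst (snd (s i)) = a \<longrightarrow> \<bar>eh n a s (fst (s i)) - \<eta> a (fst (s i))\<bar> \<le> pmin * \<epsilon> / 32)
   \<and> (\<forall>a t u. t \<in> set (test_points \<epsilon> r) \<longrightarrow> u \<in> {t - kappa \<tau> \<epsilon>, t + kappa \<tau> \<epsilon>} \<longrightarrow>
        \<bar>real (group_count n s a {x. \<eta> a x > group_threshold P a u}) / n
          - group_mass P a {x. \<eta> a x > group_threshold P a u}\<bar> \<le> \<tau>)"

lemma good_sample_Dhat_bounds:
  assumes n: "1 \<le> n" and \<epsilon>: "0 < \<epsilon>" "\<epsilon> < r" and r: "r < U_T" and \<tau>: "\<tau> \<le> cc * \<epsilon>"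
    and good: "good_sample n s \<epsilon> r \<tau>" and t: "t \<in> set (test_points \<epsilon> r)" "0 \<le> t"
  shows "Dhat eh n s t \<le> Dp P \<eta> (t - kappa \<tau> \<epsilon>) + 8 / pmin * \<tau>
    \<and> Dm P \<eta> (t + kappa \<tau> \<epsilon>) - 8 / pmin * \<tau> \<le> Dhat eh n s t"
proof -
  have q: "\<And>a. \<bar>real (ncount n s a) / n - pA P a\<bar> \<le> \<tau>"
    and close: "\<And>a i. i < n \<Longrightarrow> fst (snd (s i)) = a \<Longrightarrow>
      \<bar>eh n a s (fst (s i)) - \<eta> a (fst (s i))\<bar> \<le> pmin * \<epsilon> / 32"
    and freq: "\<And>a u. u \<in> {t - kappa \<tau> \<epsilon>, t + kappa \<tau> \<epsilon>} \<Longrightarrow>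
      \<bar>real (group_count n s a {x. \<eta> a x > group_threshold P a u}) / n
        - group_mass P a {x. \<eta> a x > group_threshold P a u}\<bar> \<le> \<tau>"
    using good t(1) unfolding good_sample_def by blast+
  have r_small: "r < 1/8" using r U_T_le(1) by linarith
  have "pmin * \<epsilon> \<le> \<epsilon>" using pmin_pos pmin_le_1 \<epsilon> by (intro mult_left_le_one_le) auto
  hence "pmin * \<epsilon> \<le> 4" using \<epsilon> r_small by linarith
  moreover have "0 \<le> pmin * \<epsilon>" using pmin_pos \<epsilon> by simp
  ultimately have tB: "t \<le> T + 2" using t r_small \<epsilon> by (auto simp: test_points_def)
  have e: "0 \<le> pmin * \<epsilon> / 32" using pmin_pos \<epsilon> by simp
  have \<kappa>: "2 * (pmin * \<epsilon> / 32) + 2 * (T + 2) * \<tau> / pmin \<le> kappa \<tau> \<epsilon>"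
    by (simp add: kappa_def)
  have "\<tau> \<le> pmin / 2" using deviation_small(1)[OF \<epsilon>(1) _ \<tau>] \<epsilon> r_small by linarith
  from Dhat_bounds[where eh=eh and s=s, OF n t(2) tB this q e \<kappa> close freq]
  show ?thesis by (intro conjI)
qed

lemma good_sample_that_close:
  assumes n: "1 \<le> n" and \<epsilon>: "0 < \<epsilon>" "\<epsilon> < r" and r: "r < U_T"
    and \<Delta>: "2 * max (gm P \<eta> \<delta> (4 * r)) (gp P \<eta> \<delta> (4 * r)) < \<Delta>" "\<Delta> < U_Delta"
    and \<tau>: "0 \<le> \<tau>" "\<tau> \<le> cc * \<epsilon>" "\<tau> \<le> cc * g_touch \<epsilon> r"
    and good: "good_sample n s \<epsilon> r \<tau>"
  shows "\<bar>that eh n s \<delta> \<Delta> r - T\<bar> \<le> pmin * \<epsilon> / 2"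
proof -
  have r_small: "r < 1/8" "4 * r < e0" "T > 0 \<Longrightarrow> 2 * r \<le> T" using r U_T_le by force+
  have \<epsilon>1: "\<epsilon> < 1" using \<epsilon> r_small by linarith
  have "8 / pmin * \<tau> \<le> \<epsilon> / 4" using shift_le[OF \<tau>(1,2)] \<epsilon> by simp
  moreover have "0 \<le> 8 / pmin * \<tau>" using \<tau>(1) pmin_pos by simp
  ultimately have k: "0 \<le> 8 / pmin * \<tau>" "8 / pmin * \<tau> \<le> 1/4" using \<epsilon>1 by linarith+
  have "pmin * \<epsilon> \<le> \<epsilon>" using pmin_pos pmin_le_1 \<epsilon> by (intro mult_left_le_one_le) auto
  interpret disparity_approximation P \<eta> \<delta> \<gamma> e0 U "Dhat eh n s" "pmin * \<epsilon> / 2" r \<Delta> "kappa \<tau> \<epsilon>" "8 / pmin * \<tau>"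
  proof
    show "0 < pmin * \<epsilon> / 2" using pmin_pos \<epsilon> by simp
    show "pmin * \<epsilon> / 2 \<le> r / 2" using \<open>pmin * \<epsilon> \<le> \<epsilon>\<close> \<epsilon> by linarith
    show "0 < \<Delta>" using \<Delta>(1) gm_nonneg[of "4 * r"] \<epsilon> by linarith
  qed (use Dhat_antimono good_sample_Dhat_bounds[OF n \<epsilon> r \<tau>(2) good] kappa_bounds[OF \<tau>(1) \<epsilon>(1) \<epsilon>1 \<tau>(2)]
        r_small \<Delta> U_Delta_le k in \<open>auto simp: test_points_def\<close>)
  have "\<bar>selected - T\<bar> \<le> pmin * \<epsilon> / 2"
    using shift_below_gaps[OF \<epsilon> r \<Delta>(2) \<tau>(1,2)] shift_below_sharp_crossing[OF \<epsilon> r \<tau>(1,3)]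
      shift_below_touching_side[OF \<epsilon> r \<tau>(1,3)]
    by (intro selected_close) auto
  thus ?thesis by (simp add: that_eq_select_level)
qed

lemma good_sample_estimate_close:
  assumes n: "1 \<le> n" and \<epsilon>: "0 < \<epsilon>" "\<epsilon> < r" and r: "r < U_T"
    and \<Delta>: "2 * max (gm P \<eta> \<delta> (4 * r)) (gp P \<eta> \<delta> (4 * r)) < \<Delta>" "\<Delta> < U_Delta"
    and \<tau>: "0 \<le> \<tau>" "\<tau> \<le> cc * \<epsilon>" "\<tau> \<le> cc * g_touch \<epsilon> r"
    and good: "good_sample n s \<epsilon> r \<tau>"
  shows "\<bar>That eh n s \<delta> \<Delta> r a - Tstar P \<eta> \<delta> a\<bar> \<le> \<epsilon>"
proof -
  have q: "\<bar>real (ncount n s a) / n - pA P a\<bar> \<le> \<tau>" using good by (simp add: good_sample_def)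
  have \<epsilon>1: "\<epsilon> < 1" using \<epsilon> r U_T_le(1) by linarith
  note \<tau>_le = deviation_small[OF \<epsilon>(1) \<epsilon>1 \<tau>(2)]
  have "pmin\<^sup>2 / (32 * (T + 2)) * \<epsilon> \<le> pmin\<^sup>2 * \<epsilon> / (4 * (T + 1))"
    using \<epsilon> pmin_pos tstar_nonneg by (simp add: frac_le)
  with \<tau>_le(2) have \<tau>_small: "\<tau> \<le> pmin\<^sup>2 * \<epsilon> / (4 * (T + 1))" by linarith
  have "\<tau> \<le> pA P a / 2" using \<tau>_le(1) pmin_le_pA[of a] by linarith
  from threshold_estimate_error[OF pmin_pos pmin_le_pA q this tstar_nonneg \<epsilon>(1)
      good_sample_that_close[OF n \<epsilon> r \<Delta> \<tau> good] \<tau>_small]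
  have "\<bar>that eh n s \<delta> \<Delta> r / (2 * (real (ncount n s a) / n)) - T / (2 * pA P a)\<bar> \<le> \<epsilon>" .
  moreover have "That eh n s \<delta> \<Delta> r a - Tstar P \<eta> \<delta> a
      = sgnA a * (that eh n s \<delta> \<Delta> r / (2 * (real (ncount n s a) / n)) - T / (2 * pA P a))"
    using n by (simp add: That_def Tstar_def algebra_simps)
  ultimately show ?thesis by (cases a) (simp_all add: abs_minus_commute)
qed

section \<open>The exceptional event\<close>

definition "probed_sets \<tau> \<epsilon> r =
  [(a, UNIV). a \<leftarrow> [True, False]] @
  [(a, {x. group_threshold P a u < \<eta> a x}). a \<leftarrow> [True, False],
     u \<leftarrow> map (\<lambda>t. t - kappa \<tau> \<epsilon>) (test_points \<epsilon> r) @ map (\<lambda>t. t + kappa \<tau> \<epsilon>) (test_points \<epsilon> r)]"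

lemma probed_sets_memI:
  "(a, UNIV) \<in> set (probed_sets \<tau> \<epsilon> r)"
  "t \<in> set (test_points \<epsilon> r) \<Longrightarrow> u \<in> {t - kappa \<tau> \<epsilon>, t + kappa \<tau> \<epsilon>} \<Longrightarrow>
    (a, {x. group_threshold P a u < \<eta> a x}) \<in> set (probed_sets \<tau> \<epsilon> r)"
  by (cases a; force simp: probed_sets_def)+

lemma length_probed_sets: "length (probed_sets \<tau> \<epsilon> r) = 30"
  by (simp add: probed_sets_def test_points_def)

lemma sample_in_\<Omega>_AE:
  fixes n :: nat
  shows "AE s in PiM {..<n} (\<lambda>_. P). \<forall>i<n. fst (s i) \<in> \<Omega>"
proof -
  interpret prob_space P by (rule prob_space_P)
  have "{w \<in> space P. fst w \<in> \<Omega>} \<in> sets P"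
    using measurable_sets[OF fst_measurable \<Omega>(1)] by (simp add: Int_def conj_commute vimage_def)
  hence "AE w in P. w \<in> {w \<in> space P. fst w \<in> \<Omega>}" by (subst AE_in_set_eq_1) (use \<Omega>(2) in auto)
  hence "AE w in P. fst w \<in> \<Omega>" by (rule eventually_mono) auto
  hence "\<forall>i\<in>{..<n}. AE s in PiM {..<n} (\<lambda>_. P). fst (s i) \<in> \<Omega>"
    by (intro ballI AE_PiM_component) (use prob_space_P in auto)
  hence "AE s in PiM {..<n} (\<lambda>_. P). \<forall>i\<in>{..<n}. fst (s i) \<in> \<Omega>"
    by (intro eventually_ball_finite) auto
  thus ?thesis by (rule eventually_mono) auto
qed

lemma not_good_sample_subset:
  "{s. \<not> good_sample n s \<epsilon> r \<tau>}
    \<subseteq> (\<Union>p\<in>set (probed_sets \<tau> \<epsilon> r).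
          {s. \<tau> < \<bar>real (group_count n s (fst p) (snd p)) / n - group_mass P (fst p) (snd p)\<bar>})
      \<union> {s. \<exists>x\<in>\<Omega>. \<bar>eh n True s x - \<eta> True x\<bar> > pmin * \<epsilon> / 32}
      \<union> {s. \<exists>x\<in>\<Omega>. \<bar>eh n False s x - \<eta> False x\<bar> > pmin * \<epsilon> / 32}
      \<union> {s. \<exists>i<n. fst (s i) \<notin> \<Omega>}"
  (is "_ \<subseteq> (\<Union>p\<in>set ?Ls. ?dev p) \<union> ?eh True \<union> ?eh False \<union> ?out")
proof
  fix s assume "s \<in> {s. \<not> good_sample n s \<epsilon> r \<tau>}"
  then consider a where "\<tau> < \<bar>real (ncount n s a) / n - pA P a\<bar>"
    | a i where "i < n" "fst (snd (s i)) = a" "pmin * \<epsilon> / 32 < \<bar>eh n a s (fst (s i)) - \<eta> a (fst (s i))\<bar>"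
    | a t u where "t \<in> set (test_points \<epsilon> r)" "u \<in> {t - kappa \<tau> \<epsilon>, t + kappa \<tau> \<epsilon>}"
        "\<tau> < \<bar>real (group_count n s a {x. \<eta> a x > group_threshold P a u}) / n
            - group_mass P a {x. \<eta> a x > group_threshold P a u}\<bar>"
    unfolding good_sample_def not_le [symmetric] by blast
  thus "s \<in> (\<Union>p\<in>set ?Ls. ?dev p) \<union> ?eh True \<union> ?eh False \<union> ?out"
  proof cases
    case (1 a)
    hence "s \<in> ?dev (a, UNIV)" by (simp add: group_count_UNIV pA_eq_group_mass)
    thus ?thesis by (intro UnI1 UN_I[OF probed_sets_memI(1)])
  next
    case (2 a i)
    show ?thesis
    proof (cases "fst (s i) \<in> \<Omega>")
      case True
      with 2 have "s \<in> ?eh a" by auto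
      thus ?thesis by (cases a) auto
    next
      case False
      with 2 show ?thesis by auto
    qed
  next
    case (3 a t u)
    hence "s \<in> ?dev (a, {x. group_threshold P a u < \<eta> a x})" by simp
    thus ?thesis by (intro UnI1 UN_I[OF probed_sets_memI(2)[OF 3(1,2)]])
  qed
qed

lemma bad_sample_bound:
  assumes n: "1 \<le> n" and \<tau>: "0 \<le> \<tau>"
    and e: "\<And>a. L\<eta> * \<phi> n a < pmin * \<epsilon> / 32" "pmin * \<epsilon> / 32 < U\<eta>"
  shows "outer_prob_le (PiM {..<n} (\<lambda>_. P)) {s. \<not> good_sample n s \<epsilon> r \<tau>}
    (60 * exp (-2 * real n * \<tau>\<^sup>2) + c1\<eta> * exp (- c2\<eta> * (pmin * \<epsilon> / 32 / \<phi> n True)\<^sup>2)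
      + c1\<eta> * exp (- c2\<eta> * (pmin * \<epsilon> / 32 / \<phi> n False)\<^sup>2))"
proof -
  let ?M = "PiM {..<n} (\<lambda>_. P)" and ?Ls = "probed_sets \<tau> \<epsilon> r"
  have "snd p \<in> sets borel" if "p \<in> set ?Ls" for p
    using that eta_greater_sets by (auto simp: probed_sets_def)
  hence "outer_prob_le ?M
      (\<Union>p\<in>set ?Ls. {s. \<tau> < \<bar>real (group_count n s (fst p) (snd p)) / n - group_mass P (fst p) (snd p)\<bar>})
      (\<Sum>p\<leftarrow>?Ls. 2 * exp (-2 * real n * \<tau>\<^sup>2))"
    using group_frequency_deviation[OF _ n \<tau>] by (intro outer_prob_le_UN_list) auto
  moreover note eh_deviation[OF n e(1) e(2)]
  moreover have "outer_prob_le ?M {s. \<exists>i<n. fst (s i) \<notin> \<Omega>} 0"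
    using sample_in_\<Omega>_AE by (intro outer_prob_le_AE) auto
  ultimately have union: "outer_prob_le ?M ((\<Union>p\<in>set ?Ls.
        {s. \<tau> < \<bar>real (group_count n s (fst p) (snd p)) / n - group_mass P (fst p) (snd p)\<bar>})
      \<union> {s. \<exists>x\<in>\<Omega>. \<bar>eh n True s x - \<eta> True x\<bar> > pmin * \<epsilon> / 32}
      \<union> {s. \<exists>x\<in>\<Omega>. \<bar>eh n False s x - \<eta> False x\<bar> > pmin * \<epsilon> / 32}
      \<union> {s. \<exists>i<n. fst (s i) \<notin> \<Omega>})
    ((\<Sum>p\<leftarrow>?Ls. 2 * exp (-2 * real n * \<tau>\<^sup>2)) + c1\<eta> * exp (- c2\<eta> * (pmin * \<epsilon> / 32 / \<phi> n True)\<^sup>2)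
      + c1\<eta> * exp (- c2\<eta> * (pmin * \<epsilon> / 32 / \<phi> n False)\<^sup>2) + 0)"
    by (intro outer_prob_le_Un)
  have sum: "(\<Sum>p\<leftarrow>?Ls. 2 * exp (-2 * real n * \<tau>\<^sup>2)) = 60 * exp (-2 * real n * \<tau>\<^sup>2)"
    by (simp add: sum_list_triv length_probed_sets)
  show ?thesis
    by (rule outer_prob_le_mono[OF union[unfolded sum]]) (use not_good_sample_subset[of n \<epsilon> r \<tau>] in blast, simp)
qed

text \<open>\<open>60 = 2 \<cdot> 30\<close>: a two-sided Hoeffding bound for each of the thirty probed sets.\<close>

definition "c1 = 60 + 2 * c1\<eta>"
definition "c2 = min (2 * cc\<^sup>2 * c\<mu>\<^sup>2) (c2\<eta> * (pmin / 32)\<^sup>2)"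
definition "c3 = (60::real)"
definition "c4 = 2 * cc\<^sup>2"

lemma c_pos: "c1 > 0" "c2 > 0" "c3 > 0" "c4 > 0"
  using eh_constants cc_pos c\<mu>_pos pmin_pos by (simp_all add: c1_def c2_def c3_def c4_def)

lemma g_touch_nonneg:
  assumes "0 \<le> \<epsilon>" "0 \<le> r"
  shows "0 \<le> g_touch \<epsilon> r"
proof -
  have "0 \<le> omega P \<eta> \<delta> \<epsilon> r" using assms by (simp add: omega_def)
  thus ?thesis using gm_nonneg gp_nonneg by (simp add: g_touch_def)
qed

lemma eh_tail_le:
  assumes "1 \<le> n" "0 < \<epsilon>"
  shows "exp (- c2\<eta> * (pmin * \<epsilon> / 32 / \<phi> n a)\<^sup>2) \<le> exp (- c2 * (\<epsilon> / max (\<phi> n True) (\<phi> n False))\<^sup>2)"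
proof -
  let ?m = "max (\<phi> n True) (\<phi> n False)"
  have \<phi>: "0 < \<phi> n a" "\<phi> n a \<le> ?m" using \<phi>_pos[OF assms(1)] by (cases a; simp)+
  have "pmin * \<epsilon> / 32 / ?m \<le> pmin * \<epsilon> / 32 / \<phi> n a"
    using \<phi> assms pmin_pos by (intro divide_left_mono) auto
  hence "(pmin * \<epsilon> / 32 / ?m)\<^sup>2 \<le> (pmin * \<epsilon> / 32 / \<phi> n a)\<^sup>2"
    using \<phi> assms pmin_pos by (intro power_mono) auto
  hence "c2\<eta> * (pmin * \<epsilon> / 32 / ?m)\<^sup>2 \<le> c2\<eta> * (pmin * \<epsilon> / 32 / \<phi> n a)\<^sup>2"
    using eh_constants by (intro mult_left_mono) auto
  moreover have "c2 * (\<epsilon> / ?m)\<^sup>2 \<le> c2\<eta> * (pmin / 32)\<^sup>2 * (\<epsilon> / ?m)\<^sup>2"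
    by (intro mult_right_mono) (auto simp: c2_def)
  moreover have "c2\<eta> * (pmin / 32)\<^sup>2 * (\<epsilon> / ?m)\<^sup>2 = c2\<eta> * (pmin * \<epsilon> / 32 / ?m)\<^sup>2"
    by (simp add: power_divide power_mult_distrib)
  ultimately show ?thesis by simp
qed

text \<open>The Hoeffding tail is of the first kind when \<open>\<tau>\<close> is proportional to \<open>\<epsilon>\<close>; otherwise \<open>\<tau>\<close> is
  proportional to \<open>g\<^sub>\<delta>\<^sub>,\<^sub>j(\<omega>)\<close> for a side \<open>j\<close> with \<open>D\<^sub>j(t\<^sup>\<star>) = \<delta>\<close>. The lower bound
  \<open>\<phi>\<^sub>n \<ge> c\<^sub>\<mu> n\<^sup>-\<^sup>1\<^sup>/\<^sup>2\<close> converts \<open>n \<epsilon>\<^sup>2\<close> into \<open>(\<epsilon> / \<phi>\<^sub>n)\<^sup>2\<close>.\<close>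

lemma hoeffding_tail_le:
  assumes n: "1 \<le> n" and \<epsilon>: "0 < \<epsilon>" "\<epsilon> < 1" and r: "0 < r"
  defines "\<tau> \<equiv> cc * min \<epsilon> (g_touch \<epsilon> r)"
  shows "60 * exp (-2 * real n * \<tau>\<^sup>2) \<le> 60 * exp (- c2 * (\<epsilon> / max (\<phi> n True) (\<phi> n False))\<^sup>2)
      + (if \<delta> = Dm P \<eta> T then c3 * exp (- c4 * real n * (gm P \<eta> \<delta> (omega P \<eta> \<delta> \<epsilon> r))\<^sup>2) else 0)
      + (if \<delta> = Dp P \<eta> T then c3 * exp (- c4 * real n * (gp P \<eta> \<delta> (omega P \<eta> \<delta> \<epsilon> r))\<^sup>2) else 0)"
    (is "_ \<le> _ + ?Im + ?Ip")
proof -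
  let ?m = "max (\<phi> n True) (\<phi> n False)"
  have I: "0 \<le> ?Im" "0 \<le> ?Ip" by (simp_all add: c3_def)
  show ?thesis
  proof (cases "\<epsilon> \<le> g_touch \<epsilon> r")
    case True
    have m: "0 < ?m" using \<phi>_pos[OF n, of True] by simp
    have "c\<mu>\<^sup>2 \<le> real n * ?m\<^sup>2"
      using sqr_le_mult_sqr_if_powr_minus_half_le[OF n] c\<mu>_pos \<phi>_lower[OF n, of True] by force
    hence "c\<mu>\<^sup>2 / ?m\<^sup>2 \<le> real n" using m by (simp add: field_simps)
    hence "2 * cc\<^sup>2 * \<epsilon>\<^sup>2 * (c\<mu>\<^sup>2 / ?m\<^sup>2) \<le> 2 * cc\<^sup>2 * \<epsilon>\<^sup>2 * real n" by (intro mult_left_mono) auto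
    moreover have "c2 * (\<epsilon> / ?m)\<^sup>2 \<le> 2 * cc\<^sup>2 * c\<mu>\<^sup>2 * (\<epsilon> / ?m)\<^sup>2" by (intro mult_right_mono) (auto simp: c2_def)
    ultimately have "c2 * (\<epsilon> / ?m)\<^sup>2 \<le> 2 * real n * \<tau>\<^sup>2"
      using True by (simp add: \<tau>_def power_divide power_mult_distrib algebra_simps)
    hence "exp (-2 * real n * \<tau>\<^sup>2) \<le> exp (- c2 * (\<epsilon> / ?m)\<^sup>2)" by simp
    thus ?thesis using I by linarith
  next
    case False
    hence "g_touch \<epsilon> r < 1" and \<tau>: "\<tau> = cc * g_touch \<epsilon> r" using \<epsilon> by (auto simp: \<tau>_def)
    hence "(\<delta> = Dm P \<eta> T \<and> g_touch \<epsilon> r = gm P \<eta> \<delta> (omega P \<eta> \<delta> \<epsilon> r))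
      \<or> (\<delta> = Dp P \<eta> T \<and> g_touch \<epsilon> r = gp P \<eta> \<delta> (omega P \<eta> \<delta> \<epsilon> r))"
      unfolding g_touch_def by (auto simp: min_def split: if_splits)
    moreover have "60 * exp (-2 * real n * \<tau>\<^sup>2) = c3 * exp (- c4 * real n * (g_touch \<epsilon> r)\<^sup>2)"
      by (simp add: \<tau> c3_def c4_def power_mult_distrib)
    ultimately have "60 * exp (-2 * real n * \<tau>\<^sup>2) \<le> ?Im + ?Ip" using I by auto
    moreover have "0 \<le> 60 * exp (- c2 * (\<epsilon> / ?m)\<^sup>2)" by simp
    ultimately show ?thesis by linarith
  qed
qed

lemma eh_deviation_level:
  assumes n: "1 \<le> n" and r: "r < U_T" and \<epsilon>: "L_T * max (\<phi> n True) (\<phi> n False) < \<epsilon>" "\<epsilon> < r"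
  shows "L\<eta> * \<phi> n a < pmin * \<epsilon> / 32" "pmin * \<epsilon> / 32 < U\<eta>"
proof -
  have "L\<eta> * \<phi> n a \<le> L\<eta> * max (\<phi> n True) (\<phi> n False)"
    using eh_constants by (intro mult_left_mono) (cases a; simp)+
  also have "\<dots> = pmin * (L_T * max (\<phi> n True) (\<phi> n False)) / 32" using pmin_pos by (simp add: L_T_def)
  also have "\<dots> < pmin * \<epsilon> / 32" using \<epsilon>(1) pmin_pos by simp
  finally show "L\<eta> * \<phi> n a < pmin * \<epsilon> / 32" .
  have "0 < L_T * max (\<phi> n True) (\<phi> n False)" using L_T_pos \<phi>_pos[OF n, of True] by simp
  hence "0 < \<epsilon>" using \<epsilon>(1) by linarith
  hence "pmin * \<epsilon> \<le> \<epsilon>" using pmin_le_1 pmin_pos by (intro mult_left_le_one_le) auto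
  thus "pmin * \<epsilon> / 32 < U\<eta>" using \<epsilon> r U_T_le(3) \<open>0 < \<epsilon>\<close> by linarith
qed

lemma tail_sum_le:
  assumes n: "1 \<le> n" and \<epsilon>: "0 < \<epsilon>" "\<epsilon> < 1" and r: "0 < r"
  defines "\<tau> \<equiv> cc * min \<epsilon> (g_touch \<epsilon> r)" and "m \<equiv> max (\<phi> n True) (\<phi> n False)"
  shows "60 * exp (-2 * real n * \<tau>\<^sup>2) + c1\<eta> * exp (- c2\<eta> * (pmin * \<epsilon> / 32 / \<phi> n True)\<^sup>2)
      + c1\<eta> * exp (- c2\<eta> * (pmin * \<epsilon> / 32 / \<phi> n False)\<^sup>2)
    \<le> c1 * exp (- c2 * (\<epsilon> / m)\<^sup>2)
      + (if \<delta> = Dm P \<eta> T then c3 * exp (- c4 * real n * (gm P \<eta> \<delta> (omega P \<eta> \<delta> \<epsilon> r))\<^sup>2) else 0)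
      + (if \<delta> = Dp P \<eta> T then c3 * exp (- c4 * real n * (gp P \<eta> \<delta> (omega P \<eta> \<delta> \<epsilon> r))\<^sup>2) else 0)"
proof -
  have "c1\<eta> * exp (- c2\<eta> * (pmin * \<epsilon> / 32 / \<phi> n a)\<^sup>2) \<le> c1\<eta> * exp (- c2 * (\<epsilon> / m)\<^sup>2)" for a
    using eh_tail_le[OF n \<epsilon>(1)] eh_constants by (simp add: m_def)
  note eh_tails = this[of True] this[of False]
  have "c1 * exp (- c2 * (\<epsilon> / m)\<^sup>2)
      = 60 * exp (- c2 * (\<epsilon> / m)\<^sup>2) + c1\<eta> * exp (- c2 * (\<epsilon> / m)\<^sup>2) + c1\<eta> * exp (- c2 * (\<epsilon> / m)\<^sup>2)"
    by (simp add: c1_def algebra_simps)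
  with eh_tails hoeffding_tail_le[OF n \<epsilon> r, folded \<tau>_def m_def] show ?thesis by linarith
qed

lemma estimate_deviation_bound:
  assumes n: "1 \<le> n" and r: "r < U_T"
    and \<Delta>: "2 * max (gm P \<eta> \<delta> (4 * r)) (gp P \<eta> \<delta> (4 * r)) < \<Delta>" "\<Delta> < U_Delta"
    and \<epsilon>: "L_T * max (\<phi> n True) (\<phi> n False) < \<epsilon>" "\<epsilon> < r"
  shows "outer_prob_le (PiM {..<n} (\<lambda>_. P)) {s. \<bar>That eh n s \<delta> \<Delta> r a - Tstar P \<eta> \<delta> a\<bar> > \<epsilon>}
    (c1 * exp (- c2 * (\<epsilon> / max (\<phi> n True) (\<phi> n False))\<^sup>2)
      + (if \<delta> = Dm P \<eta> T then c3 * exp (- c4 * real n * (gm P \<eta> \<delta> (omega P \<eta> \<delta> \<epsilon> r))\<^sup>2) else 0)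
      + (if \<delta> = Dp P \<eta> T then c3 * exp (- c4 * real n * (gp P \<eta> \<delta> (omega P \<eta> \<delta> \<epsilon> r))\<^sup>2) else 0))"
proof -
  define \<tau> where "\<tau> = cc * min \<epsilon> (g_touch \<epsilon> r)"
  have "0 < L_T * max (\<phi> n True) (\<phi> n False)" using L_T_pos \<phi>_pos[OF n, of True] by simp
  hence \<epsilon>0: "0 < \<epsilon>" using \<epsilon>(1) by linarith
  have \<epsilon>1: "\<epsilon> < 1" and r0: "0 < r" using \<epsilon> \<epsilon>0 r U_T_le(1) by linarith+
  have "0 \<le> g_touch \<epsilon> r" using \<epsilon>0 \<epsilon>(2) by (intro g_touch_nonneg) auto
  hence \<tau>: "0 \<le> \<tau>" "\<tau> \<le> cc * \<epsilon>" "\<tau> \<le> cc * g_touch \<epsilon> r"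
    unfolding \<tau>_def using cc_pos \<epsilon>0 by (auto intro: mult_left_mono)
  have "{s. \<bar>That eh n s \<delta> \<Delta> r a - Tstar P \<eta> \<delta> a\<bar> > \<epsilon>} \<inter> space (PiM {..<n} (\<lambda>_. P))
      \<subseteq> {s. \<not> good_sample n s \<epsilon> r \<tau>}"
    using good_sample_estimate_close[OF n \<epsilon>0 \<epsilon>(2) r \<Delta> \<tau>] by (auto simp: not_le[symmetric])
  from outer_prob_le_mono[OF bad_sample_bound[OF n \<tau>(1) eh_deviation_level[OF n r \<epsilon>]] this
      tail_sum_le[OF n \<epsilon>0 \<epsilon>1 r0, folded \<tau>_def]]
  show ?thesis .
qed

end

lemma margin_population_if_margin_condition:
  assumes "fair_population P \<eta>" "0 \<le> \<delta>" "0 < \<gamma>" "margin_condition P \<eta> \<delta> \<gamma>"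
  obtains e0 U where "margin_population P \<eta> \<delta> \<gamma> e0 U"
  using assms unfolding margin_condition_def margin_population_def margin_population_axioms_def by blast

theorem corollary6p1:
  fixes P :: "('x::euclidean_space \<times> bool \<times> bool) measure"
    and \<eta> :: "bool \<Rightarrow> 'x \<Rightarrow> real"
    and eh :: "nat \<Rightarrow> bool \<Rightarrow> (nat \<Rightarrow> 'x \<times> bool \<times> bool) \<Rightarrow> 'x \<Rightarrow> real"
    and \<phi> :: "nat \<Rightarrow> bool \<Rightarrow> real"
    and \<delta> \<gamma> c\<mu> :: real
  assumes "prob_space P"
    and "sets P = sets (borel \<Otimes>\<^sub>M count_space UNIV \<Otimes>\<^sub>M count_space UNIV)"
    and "\<forall>a. pA P a > 0"
    and "is_regression P \<eta>"
    and "0 \<le> \<delta>"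
    and "0 < \<gamma>"
    and "Dp P \<eta> 0 \<ge> - Dm P \<eta> 0"
    and "margin_condition P \<eta> \<delta> \<gamma>"
    and "c\<mu> > 0"
    and "\<forall>n a. 1 \<le> n \<longrightarrow> \<phi> n a > 0"
    and "\<forall>n m a. 1 \<le> n \<longrightarrow> n \<le> m \<longrightarrow> \<phi> m a \<le> \<phi> n a"
    and "\<forall>n a. 1 \<le> n \<longrightarrow> \<phi> n a \<ge> c\<mu> * real n powr (-1/2)"
    and "\<forall>n a x. (\<lambda>s. eh n a s x) \<in> borel_measurable (\<Pi>\<^sub>M i\<in>{..<n}. P)"
    and "\<exists>c1\<eta> c2\<eta> L\<eta> U\<eta> \<Omega>. c1\<eta> > 0 \<and> c2\<eta> > 0 \<and> L\<eta> > 0 \<and> U\<eta> > 0 \<and>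
           \<Omega> \<in> sets borel \<and> measure P {w \<in> space P. fst w \<in> \<Omega>} = 1 \<and>
           (\<forall>n a \<epsilon>. 1 \<le> n \<and> L\<eta> * \<phi> n a < \<epsilon> \<and> \<epsilon> < U\<eta> \<longrightarrow>
              outer_prob_le (\<Pi>\<^sub>M i\<in>{..<n}. P)
                {s. \<exists>x\<in>\<Omega>. \<bar>eh n a s x - \<eta> a x\<bar> > \<epsilon>}
                (c1\<eta> * exp (- c2\<eta> * (\<epsilon> / \<phi> n a)\<^sup>2)))"
  shows "\<exists>c1 c2 c3 c4 LT UT U\<Delta>. c1 > 0 \<and> c2 > 0 \<and> c3 > 0 \<and> c4 > 0 \<and> LT > 0 \<and> UT > 0 \<and> U\<Delta> > 0 \<and>
    (\<forall>a n r \<Delta> \<epsilon>. 1 \<le> n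
        \<and> LT * max (\<phi> n True) (\<phi> n False) < r \<and> r < UT
        \<and> 2 * max (gm P \<eta> \<delta> (4 * r)) (gp P \<eta> \<delta> (4 * r)) < \<Delta> \<and> \<Delta> < U\<Delta>
        \<and> LT * max (\<phi> n True) (\<phi> n False) < \<epsilon> \<and> \<epsilon> < r \<longrightarrow>
      outer_prob_le (\<Pi>\<^sub>M i\<in>{..<n}. P)
        {s. \<bar>That eh n s \<delta> \<Delta> r a - Tstar P \<eta> \<delta> a\<bar> > \<epsilon>}
        (c1 * exp (- c2 * (\<epsilon> / max (\<phi> n True) (\<phi> n False))\<^sup>2)
         + (if \<delta> = Dm P \<eta> (tstar P \<eta> \<delta>)
            then c3 * exp (- c4 * real n * (gm P \<eta> \<delta> (omega P \<eta> \<delta> \<epsilon> r))\<^sup>2) else 0)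
         + (if \<delta> = Dp P \<eta> (tstar P \<eta> \<delta>)
            then c3 * exp (- c4 * real n * (gp P \<eta> \<delta> (omega P \<eta> \<delta> \<epsilon> r))\<^sup>2) else 0)))"
proof -
  have "fair_population P \<eta>" using assms(1-4) by (intro fair_population.intro) auto
  then obtain e0 U where "margin_population P \<eta> \<delta> \<gamma> e0 U"
    using assms(5,6,8) by (rule margin_population_if_margin_condition)
  moreover obtain c1\<eta> c2\<eta> L\<eta> U\<eta> \<Omega> where "tstar_estimation_axioms P \<eta> eh \<phi> c\<mu> c1\<eta> c2\<eta> L\<eta> U\<eta> \<Omega>"
    using assms(14)
    by (elim exE conjE, intro that tstar_estimation_axioms.intro) (use assms(9,10,12) in blast)+
  ultimately interpret tstar_estimation P \<eta> \<delta> \<gamma> e0 U eh \<phi> c\<mu> c1\<eta> c2\<eta> L\<eta> U\<eta> \<Omega>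
    by (intro tstar_estimation.intro)
  show ?thesis
  proof (intro exI conjI)
    show "c1 > 0" "c2 > 0" "c3 > 0" "c4 > 0" by (fact c_pos)+
    show "L_T > 0" "U_T > 0" "U_Delta > 0" by (fact L_T_pos U_T_pos U_Delta_pos)+
  qed (use estimate_deviation_bound in blast)
qed

end
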